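(* Consider a constrained Markov decision process (CMDP) as described in the context, and let $\varepsilon \in (0,1)$. Run the inexact augmented Lagrangian algorithm described in the context with dual initialization $\lambda_1 = 0$, an arbitrary penalty parameter $\beta > 0$, subproblem accuracies $\epsilon_t = \mathcal{O}(1/t^2)$, and $T = \mathcal{O}(1/\varepsilon^2)$ outer iterations. Suppose that for every $t \ge 1$ an oracle is available which returns a policy $\pi_{t+1}$ satisfying $$\mathcal{L}^\beta(\pi_{t+1}, \lambda_t) \;\ge\; \max_{\pi} \mathcal{L}^\beta(\pi, \lambda_t) - \epsilon_t .$$ Then the returned (single, stationary, stochastic) policy $\pi_{T+1}$ is an $\varepsilon$-approximate solution of the CMDP, i.e. $$V^{\pi_{T+1}}_r(\rho) \ge V^*_r(\rho) - \varepsilon \quad\text{and}\quad V^{\pi_{T+1}}_{c_i}(\rho) \ge b_i - \varepsilon \ \text{ for all } i \in [m].$$ (The $\mathcal{O}(\cdot)$ notation hides constants independent of $t$ and $\varepsilon$.)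
   Context: CMDP: finite state space $\mathcal{S}$ and finite action space $\mathcal{A}$; transition kernel $\mathcal{P}(\cdot\mid s,a)$; initial distribution $\rho$ on $\mathcal{S}$; discount factor $\gamma \in [0,1)$; reward $r:\mathcal{S}\times\mathcal{A}\to[0,1]$; constraint rewards $c_1,\dots,c_m:\mathcal{S}\times\mathcal{A}\to[0,1]$; thresholds $b_1,\dots,b_m \ge 0$. A policy $\pi$ assigns to every state $s$ a probability distribution $\pi(\cdot\mid s)$ on $\mathcal{A}$. For a bounded $u:\mathcal{S}\times\mathcal{A}\to\mathbb{R}$, $Q^\pi_u(s,a) = \mathbb{E}[\sum_{\tau\ge 0}\gamma^\tau u(s_\tau,a_\tau)\mid s_0=s,a_0=a]$ with $s_{\tau+1}\sim\mathcal{P}(\cdot\mid s_\tau,a_\tau)$, $a_{\tau+1}\sim \pi(\cdot\mid s_{\tau+1})$; $V^\pi_u(s)=\sum_a \pi(a\mid s)Q^\pi_u(s,a)$ and $V^\pi_u(\rho)=\sum_s\rho(s)V^\pi_u(s)$. The CMDP problem is $\max_\pi V^\pi_r(\rho)$ subject to $V^\pi_{c_i}(\rho)\ge b_i$ for all $i\in[m]$; $V^*_r(\rho)$ denotes its optimal value. Augmented Lagrangian: for $\beta>0$ and $\lambda\in\mathbb{R}^m$, $$\mathcal{L}^\beta(\pi,\lambda) = V^\pi_r(\rho) + \frac{\beta}{2}\sum_{i=1}^m\Big(-\min\Big\{V^\pi_{c_i}(\rho)-b_i-\frac{\lambda_i}{\beta},0\Big\}^2 + \frac{\lambda_i^2}{\beta^2}\Big).$$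 Algorithm: start from an initial policy $\pi_1$ and $\lambda_1$; for $t=1,\dots,T$: obtain $\pi_{t+1}$ from the oracle (accuracy $\epsilon_t$ for $\mathcal{L}^\beta(\cdot,\lambda_t)$), then for each $i\in[m]$ set $\lambda_{t+1}[i] = \lambda_t[i] - \frac{\beta}{2}\big(V^{\pi_{t+1}}_{c_i}(\rho) - [b_i + \xi_i(\pi_{t+1})]\big)$, where $\xi_i(\pi) = \max\{V^\pi_{c_i}(\rho) - b_i - \lambda_t[i]/\beta,\,0\}$. Return $\pi_{T+1}$. *)

theory Defs
  imports "HOL-Analysis.Analysis"
begin

text \<open>Finite CMDP. States 's and actions 'a are finite types.
  Transition kernel P s a s' = P(s' | s, a); policy pol s a = pol(a | s);
  rewards are functions on state-action pairs.\<close>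

definition is_distr :: "('x::finite \<Rightarrow> real) \<Rightarrow> bool" where
  "is_distr d \<longleftrightarrow> (\<forall>x. 0 \<le> d x) \<and> (\<Sum>x\<in>UNIV. d x) = 1"

definition is_kernel :: "('s::finite \<Rightarrow> 'a::finite \<Rightarrow> 's \<Rightarrow> real) \<Rightarrow> bool" where
  "is_kernel P \<longleftrightarrow> (\<forall>s a. is_distr (P s a))"

definition is_policy :: "('s::finite \<Rightarrow> 'a::finite \<Rightarrow> real) \<Rightarrow> bool" where
  "is_policy pol \<longleftrightarrow> (\<forall>s. is_distr (pol s))"

text \<open>Distribution of (s_tau, a_tau) when (s_0,a_0) ~ d0,
  s_{tau+1} ~ P(.|s_tau,a_tau), a_{tau+1} ~ pol(.|s_{tau+1}).\<close>
fun sa_dist :: "('s::finite \<Rightarrow> 'a::finite \<Rightarrow> 's \<Rightarrow> real) \<Rightarrow> ('s \<Rightarrow> 'a \<Rightarrow> real)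
    \<Rightarrow> ('s \<times> 'a \<Rightarrow> real) \<Rightarrow> nat \<Rightarrow> 's \<times> 'a \<Rightarrow> real" where
  "sa_dist P pol d0 0 = d0"
| "sa_dist P pol d0 (Suc n) = (\<lambda>(s', a').
      (\<Sum>x\<in>UNIV. sa_dist P pol d0 n x * P (fst x) (snd x) s') * pol s' a')"

definition Qfun :: "('s::finite \<Rightarrow> 'a::finite \<Rightarrow> 's \<Rightarrow> real) \<Rightarrow> real \<Rightarrow> ('s \<Rightarrow> 'a \<Rightarrow> real)
    \<Rightarrow> ('s \<times> 'a \<Rightarrow> real) \<Rightarrow> 's \<Rightarrow> 'a \<Rightarrow> real" where
  "Qfun P \<gamma> pol u s a =
     (\<Sum>\<tau>. \<gamma> ^ \<tau> * (\<Sum>x\<in>UNIV. sa_dist P pol (\<lambda>y. if y = (s, a) then 1 else 0) \<tau> x * u x))"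

definition Vfun :: "('s::finite \<Rightarrow> 'a::finite \<Rightarrow> 's \<Rightarrow> real) \<Rightarrow> real \<Rightarrow> ('s \<Rightarrow> 'a \<Rightarrow> real)
    \<Rightarrow> ('s \<times> 'a \<Rightarrow> real) \<Rightarrow> 's \<Rightarrow> real" where
  "Vfun P \<gamma> pol u s = (\<Sum>a\<in>UNIV. pol s a * Qfun P \<gamma> pol u s a)"

definition Vrho :: "('s::finite \<Rightarrow> 'a::finite \<Rightarrow> 's \<Rightarrow> real) \<Rightarrow> real \<Rightarrow> ('s \<Rightarrow> real)
    \<Rightarrow> ('s \<Rightarrow> 'a \<Rightarrow> real) \<Rightarrow> ('s \<times> 'a \<Rightarrow> real) \<Rightarrow> real" where
  "Vrho P \<gamma> \<rho> pol u = (\<Sum>s\<in>UNIV. \<rho> s * Vfun P \<gamma> pol u s)"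

text \<open>Constraints indexed by i < m (i.e. [m] shifted to 0-based).\<close>
definition feasible_policy where
  "feasible_policy P \<gamma> \<rho> c b m pol \<longleftrightarrow>
     is_policy pol \<and> (\<forall>i<m. Vrho P \<gamma> \<rho> pol (c i) \<ge> b i)"

definition opt_value where
  "opt_value P \<gamma> \<rho> r c b m = Sup {Vrho P \<gamma> \<rho> pol r | pol. feasible_policy P \<gamma> \<rho> c b m pol}"

definition aug_lag where
  "aug_lag P \<gamma> \<rho> r c b m \<beta> pol lam =
     Vrho P \<gamma> \<rho> pol r + \<beta> / 2 * (\<Sum>i<m.
        - (min (Vrho P \<gamma> \<rho> pol (c i) - b i - lam i / \<beta>) 0)\<^sup>2 + (lam i)\<^sup>2 / \<beta>\<^sup>2)"

text \<open>Dual iterates: lam_seq ... pis 1 = lambda_1 = 0 and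
  lambda_{t+1}[i] = lambda_t[i] - beta/2 (V_{c_i}^{pi_{t+1}} - [b_i + xi_i(pi_{t+1})]),
  xi_i(pol) = max (V_{c_i}^pol - b_i - lambda_t[i]/beta) 0.
  (Index 0 is unused; lam_seq at 0 is also 0.)\<close>
fun lam_seq :: "('s::finite \<Rightarrow> 'a::finite \<Rightarrow> 's \<Rightarrow> real) \<Rightarrow> real \<Rightarrow> ('s \<Rightarrow> real)
    \<Rightarrow> (nat \<Rightarrow> 's \<times> 'a \<Rightarrow> real) \<Rightarrow> (nat \<Rightarrow> real) \<Rightarrow> real
    \<Rightarrow> (nat \<Rightarrow> 's \<Rightarrow> 'a \<Rightarrow> real) \<Rightarrow> nat \<Rightarrow> nat \<Rightarrow> real" where
  "lam_seq P \<gamma> \<rho> c b \<beta> pis 0 = (\<lambda>i. 0)"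
| "lam_seq P \<gamma> \<rho> c b \<beta> pis (Suc 0) = (\<lambda>i. 0)"
| "lam_seq P \<gamma> \<rho> c b \<beta> pis (Suc (Suc t)) = (\<lambda>i.
     let l = lam_seq P \<gamma> \<rho> c b \<beta> pis (Suc t) i;
         v = Vrho P \<gamma> \<rho> (pis (Suc (Suc t))) (c i)
     in l - \<beta> / 2 * (v - (b i + max (v - b i - l / \<beta>) 0)))"

end

theory Submission
  imports Defs
begin

text \<open>Discounted occupancy measures turn the CMDP into a linear program over the occupancy polytope,
  whose points are exactly the occupancy measures of stationary policies, and Farkas' lemma provides
  Lagrange multipliers for it. The algorithm is thus the inexact augmented Lagrangian method for a
  convex program with affine data. Its dual function \<open>d\<close> satisfies \<open>d \<ge> opt\<close>, with equality at the
  multipliers. Each dual step decreases the distance to the multipliers up to the subproblem error;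
  telescoping, and averaging over the second half of the run, gives a dual gap of order \<open>1/T\<close> at
  step \<open>T\<close>. The dual gap bounds the squared gradient of \<open>d\<close>, which measures the constraint
  violation and also controls the loss in the objective, so \<open>T = O(1/\<epsilon>\<^sup>2)\<close> iterations give an
  \<open>\<epsilon>\<close>-optimal, \<open>\<epsilon>\<close>-feasible policy.\<close>

section \<open>The augmented Lagrangian penalty\<close>

definition penalty :: "real \<Rightarrow> real \<Rightarrow> real \<Rightarrow> real" where
  "penalty \<beta> g l = \<beta> / 2 * (- (min (g - l / \<beta>) 0)\<^sup>2 + l\<^sup>2 / \<beta>\<^sup>2)"

definition penalty_mult :: "real \<Rightarrow> real \<Rightarrow> real \<Rightarrow> real" where
  "penalty_mult \<beta> g l = max (l - \<beta> * g) 0"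

definition penalty_grad :: "real \<Rightarrow> real \<Rightarrow> real \<Rightarrow> real" where
  "penalty_grad \<beta> g l = min g (l / \<beta>)"

lemma penalty_mult_nonneg: "0 \<le> penalty_mult \<beta> g l"
  unfolding penalty_mult_def by simp

lemma penalty_grad_le: "penalty_grad \<beta> g l \<le> g"
  unfolding penalty_grad_def by simp

lemma penalty_mult_eq_grad:
  assumes "0 < \<beta>" shows "penalty_mult \<beta> g l = l - \<beta> * penalty_grad \<beta> g l"
  using assms unfolding penalty_grad_def penalty_mult_def
  by (auto simp: field_simps min_def max_def)

lemma penalty_grad_mult:
  assumes "0 < \<beta>"
  shows "penalty_grad \<beta> g l * penalty_mult \<beta> g l = g * penalty_mult \<beta> g l"
proof (cases "\<beta> * g < l")
  case True
  then have "g < l / \<beta>" using assms by (simp add: field_simps)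
  then show ?thesis unfolding penalty_grad_def by simp
qed (simp add: penalty_mult_def)

lemma penalty_eq_mult:
  assumes "0 < \<beta>"
  shows "penalty \<beta> g l = penalty_mult \<beta> g l * g + (penalty_mult \<beta> g l - l)\<^sup>2 / (2 * \<beta>)"
proof (cases "\<beta> * g \<le> l")
  case True
  then have "g - l / \<beta> \<le> 0" using assms by (simp add: field_simps)
  with True assms show ?thesis unfolding penalty_def penalty_mult_def
    by (simp add: field_simps power2_eq_square)
next
  case False
  then have "g - l / \<beta> > 0" using assms by (simp add: field_simps)
  with False assms show ?thesis unfolding penalty_def penalty_mult_def
    by (simp add: field_simps power2_eq_square)
qed

lemma penalty_eq_grad:
  assumes "0 < \<beta>"
  shows "penalty \<beta> g l = l * penalty_grad \<beta> g l - \<beta> * (penalty_grad \<beta> g l)\<^sup>2 / 2"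
  using assms unfolding penalty_def penalty_grad_def
  by (cases "g \<le> l / \<beta>") (simp_all add: field_simps power2_eq_square)

text \<open>The penalty is the minimum over \<open>\<nu> \<ge> 0\<close> of \<open>\<nu> g + (\<nu> - l)\<^sup>2 / (2\<beta>)\<close>, attained at
  \<open>penalty_mult\<close>; the extra square is the strong convexity of that expression in \<open>\<nu>\<close>.\<close>

lemma penalty_le_proximal:
  assumes "0 < \<beta>" and "0 \<le> \<nu>"
  shows "penalty \<beta> g l + (\<nu> - penalty_mult \<beta> g l)\<^sup>2 / (2 * \<beta>) \<le> \<nu> * g + (\<nu> - l)\<^sup>2 / (2 * \<beta>)"
proof -
  let ?\<mu> = "penalty_mult \<beta> g l"
  have "\<nu> * g + (\<nu> - l)\<^sup>2 / (2 * \<beta>) - (?\<mu> * g + (?\<mu> - l)\<^sup>2 / (2 * \<beta>)) - (\<nu> - ?\<mu>)\<^sup>2 / (2 * \<beta>)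
      = (\<nu> - ?\<mu>) * (g + (?\<mu> - l) / \<beta>)"
    using assms by (simp add: field_simps power2_eq_square)
  moreover have "0 \<le> (\<nu> - ?\<mu>) * (g + (?\<mu> - l) / \<beta>)"
  proof (cases "\<beta> * g \<le> l")
    case True
    then have "g + (?\<mu> - l) / \<beta> = 0" using assms unfolding penalty_mult_def by (simp add: field_simps)
    then show ?thesis by simp
  next
    case False
    then have "?\<mu> = 0" and "0 \<le> g - l / \<beta>"
      using assms unfolding penalty_mult_def by (simp_all add: field_simps)
    with assms show ?thesis by simp
  qed
  ultimately show ?thesis using penalty_eq_mult[OF assms(1), of g l] by linarith
qed

lemma penalty_nonneg:
  assumes "0 < \<beta>" and "0 \<le> g" shows "0 \<le> penalty \<beta> g l"
proof (cases "g \<le> l / \<beta>")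
  case True
  then have "\<beta> * g \<le> l" and "0 \<le> \<beta> * g" using assms by (simp_all add: field_simps)
  then have "0 \<le> l - \<beta> * g / 2" by linarith
  moreover have "penalty \<beta> g l = g * (l - \<beta> * g / 2)"
    using True penalty_eq_grad[OF assms(1), of g l]
    by (simp add: penalty_grad_def power2_eq_square algebra_simps)
  ultimately show ?thesis using assms(2) by simp
next
  case False
  then show ?thesis using assms unfolding penalty_def by (simp add: min_def)
qed

lemma penalty_le_mult:
  assumes "0 < \<beta>" and "0 \<le> l" shows "penalty \<beta> g l \<le> l * g"
proof -
  have "0 \<le> (l - penalty_mult \<beta> g l)\<^sup>2 / (2 * \<beta>)" using assms by simp
  then show ?thesis using penalty_le_proximal[OF assms, of g l] by simp
qed

lemma penalty_subgradient:
  assumes "0 < \<beta>"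
  shows "penalty \<beta> g l + penalty_grad \<beta> g l * (l' - l) \<le> penalty \<beta> g l'"
proof -
  let ?a = "penalty_grad \<beta> g l" and ?c = "penalty_grad \<beta> g l'"
  have "penalty \<beta> g l' - (penalty \<beta> g l + ?a * (l' - l))
      = (l' - \<beta> * ?c) * (?c - ?a) + \<beta> * (?c - ?a)\<^sup>2 / 2"
    unfolding penalty_eq_grad[OF assms] by (simp add: field_simps power2_eq_square)
  moreover have "0 \<le> (l' - \<beta> * ?c) * (?c - ?a)"
  proof (cases "g \<le> l' / \<beta>")
    case True
    then have "?c = g" and "0 \<le> l' - \<beta> * g"
      using assms by (simp_all add: penalty_grad_def field_simps)
    then show ?thesis using penalty_grad_le[of \<beta> g l] by simp
  next
    case False
    then show ?thesis using assms by (simp add: penalty_grad_def)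
  qed
  moreover have "0 \<le> \<beta> * (?c - ?a)\<^sup>2 / 2" using assms by simp
  ultimately show ?thesis by linarith
qed

lemma penalty_convex_comb_ge:
  assumes "0 < \<beta>" and "0 \<le> s" "s \<le> 1"
  shows "(1 - s) * penalty \<beta> g l
      + s * (penalty_mult \<beta> g l * g' + (penalty_mult \<beta> g l - l)\<^sup>2 / (2 * \<beta>))
      - s\<^sup>2 * \<beta> / 2 * (g' + (penalty_mult \<beta> g l - l) / \<beta>)\<^sup>2
    \<le> penalty \<beta> ((1 - s) * g + s * g') l"
proof -
  define \<nu> where "\<nu> = penalty_mult \<beta> ((1 - s) * g + s * g') l"
  define \<mu> where "\<mu> = penalty_mult \<beta> g l"
  define d where "d = g' + (\<mu> - l) / \<beta>"
  have "penalty \<beta> ((1 - s) * g + s * g') l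
      = (1 - s) * (\<nu> * g + (\<nu> - l)\<^sup>2 / (2 * \<beta>)) + s * (\<nu> * g' + (\<nu> - l)\<^sup>2 / (2 * \<beta>))"
    using penalty_eq_mult[OF assms(1), of "(1 - s) * g + s * g'" l, folded \<nu>_def]
    by (simp add: algebra_simps diff_divide_distrib)
  moreover have "(1 - s) * (penalty \<beta> g l + (\<nu> - \<mu>)\<^sup>2 / (2 * \<beta>))
      \<le> (1 - s) * (\<nu> * g + (\<nu> - l)\<^sup>2 / (2 * \<beta>))"
    using penalty_le_proximal[OF assms(1), where \<nu> = \<nu> and g = g and l = l] assms
    unfolding \<mu>_def \<nu>_def by (simp add: penalty_mult_nonneg mult_left_mono)
  moreover have "(1 - s) * ((\<nu> - \<mu>)\<^sup>2 / (2 * \<beta>)) + s * (\<nu> * g' + (\<nu> - l)\<^sup>2 / (2 * \<beta>))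
      - (s * (\<mu> * g' + (\<mu> - l)\<^sup>2 / (2 * \<beta>)) - s\<^sup>2 * \<beta> / 2 * d\<^sup>2) = ((\<nu> - \<mu>) + s * \<beta> * d)\<^sup>2 / (2 * \<beta>)"
    unfolding d_def using assms by (simp add: field_simps power2_eq_square)
  moreover have "0 \<le> ((\<nu> - \<mu>) + s * \<beta> * d)\<^sup>2 / (2 * \<beta>)" using assms by simp
  ultimately show ?thesis unfolding \<mu>_def d_def by (simp add: algebra_simps)
qed

lemma penalty_convex_comb_feasible_ge:
  assumes "0 < \<beta>" and "0 \<le> g'" and "0 \<le> s" "s \<le> 1"
  shows "(1 - s) * penalty \<beta> g l + s * (1 - s) * (penalty_mult \<beta> g l - l)\<^sup>2 / (2 * \<beta>)
    \<le> penalty \<beta> ((1 - s) * g + s * g') l"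
proof -
  define \<nu> where "\<nu> = penalty_mult \<beta> ((1 - s) * g + s * g') l"
  define \<mu> where "\<mu> = penalty_mult \<beta> g l"
  have "penalty \<beta> ((1 - s) * g + s * g') l
      = (1 - s) * (\<nu> * g + (\<nu> - l)\<^sup>2 / (2 * \<beta>)) + s * (\<nu> * g' + (\<nu> - l)\<^sup>2 / (2 * \<beta>))"
    using penalty_eq_mult[OF assms(1), of "(1 - s) * g + s * g'" l, folded \<nu>_def]
    by (simp add: algebra_simps diff_divide_distrib)
  moreover have "(1 - s) * (penalty \<beta> g l + (\<nu> - \<mu>)\<^sup>2 / (2 * \<beta>))
      \<le> (1 - s) * (\<nu> * g + (\<nu> - l)\<^sup>2 / (2 * \<beta>))"
    using penalty_le_proximal[OF assms(1), where \<nu> = \<nu> and g = g and l = l] assms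
    unfolding \<mu>_def \<nu>_def by (simp add: penalty_mult_nonneg mult_left_mono)
  moreover have "s * ((\<nu> - l)\<^sup>2 / (2 * \<beta>)) \<le> s * (\<nu> * g' + (\<nu> - l)\<^sup>2 / (2 * \<beta>))"
    using assms penalty_mult_nonneg[of \<beta> "(1 - s) * g + s * g'" l] unfolding \<nu>_def
    by (intro mult_left_mono) auto
  moreover have "(1 - s) * ((\<nu> - \<mu>)\<^sup>2 / (2 * \<beta>))
      + s * ((\<nu> - l)\<^sup>2 / (2 * \<beta>)) - s * (1 - s) * (\<mu> - l)\<^sup>2 / (2 * \<beta>)
      = ((1 - s) * (\<nu> - \<mu>) + s * (\<nu> - l))\<^sup>2 / (2 * \<beta>)"
    using assms by (simp add: field_simps power2_eq_square)
  moreover have "0 \<le> ((1 - s) * (\<nu> - \<mu>) + s * (\<nu> - l))\<^sup>2 / (2 * \<beta>)" using assms by simp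
  ultimately show ?thesis unfolding \<mu>_def by (simp add: algebra_simps)
qed

section \<open>The inexact augmented Lagrangian method for convex programs\<close>

lemma le_of_le_plus_scaled:
  fixes a b c :: real
  assumes "\<And>s. 0 < s \<Longrightarrow> s \<le> 1 \<Longrightarrow> a \<le> b + s * c"
  shows "a \<le> b"
proof (rule field_le_epsilon)
  fix e :: real assume "0 < e"
  define s where "s = min 1 (e / (\<bar>c\<bar> + 1))"
  have s: "0 < s" "s \<le> 1" using \<open>0 < e\<close> by (auto simp: s_def)
  have "s * c \<le> s * (\<bar>c\<bar> + 1)" using s by (intro mult_left_mono) auto
  also have "\<dots> \<le> e / (\<bar>c\<bar> + 1) * (\<bar>c\<bar> + 1)" by (intro mult_right_mono) (auto simp: s_def)
  also have "\<dots> = e" by (simp add: add_pos_nonneg)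
  finally show "a \<le> b + e" using assms[OF s] by linarith
qed

lemma sq_dist_midpoint_le:
  fixes a b c :: real
  shows "(a - (b + c) / 2)\<^sup>2 - (a - b)\<^sup>2 \<le> (a - c)\<^sup>2 - (c - b)\<^sup>2 / 2"
proof -
  have "0 \<le> (a - c - (b - c) / 2)\<^sup>2" by simp
  then show ?thesis by (simp add: power2_eq_square field_simps)
qed

lemma mult_le_weighted_squares:
  fixes x y a :: real
  assumes "0 < a" shows "x * y \<le> a * x\<^sup>2 + y\<^sup>2 / (4 * a)"
proof -
  have "0 \<le> (2 * a * x - y)\<^sup>2 / (4 * a)" using assms by simp
  also have "\<dots> = a * x\<^sup>2 + y\<^sup>2 / (4 * a) - x * y" using assms
    by (simp add: field_simps power2_eq_square)
  finally show ?thesis by simp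
qed

locale aug_lagrangian =
  fixes K :: "'v::real_vector set" and obj :: "'v \<Rightarrow> real" and constr :: "nat \<Rightarrow> 'v \<Rightarrow> real"
    and m :: nat and \<beta> :: real
  assumes beta_pos: "0 < \<beta>"
    and convex_K: "convex K"
    and obj_affine: "\<And>y z s. obj ((1 - s) *\<^sub>R y + s *\<^sub>R z) = (1 - s) * obj y + s * obj z"
    and constr_affine:
      "\<And>i y z s. constr i ((1 - s) *\<^sub>R y + s *\<^sub>R z) = (1 - s) * constr i y + s * constr i z"
    and auglag_has_max: "\<And>l. \<exists>y\<in>K. \<forall>z\<in>K.
      obj z + (\<Sum>i<m. penalty \<beta> (constr i z) (l i)) \<le> obj y + (\<Sum>i<m. penalty \<beta> (constr i y) (l i))"
begin

definition auglag :: "(nat \<Rightarrow> real) \<Rightarrow> 'v \<Rightarrow> real" where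
  "auglag l y = obj y + (\<Sum>i<m. penalty \<beta> (constr i y) (l i))"

definition lagrangian :: "'v \<Rightarrow> (nat \<Rightarrow> real) \<Rightarrow> real" where
  "lagrangian y \<nu> = obj y + (\<Sum>i<m. \<nu> i * constr i y)"

definition auglag_argmax :: "(nat \<Rightarrow> real) \<Rightarrow> 'v" where
  "auglag_argmax l = (SOME y. y \<in> K \<and> (\<forall>z\<in>K. auglag l z \<le> auglag l y))"

definition dual_fn :: "(nat \<Rightarrow> real) \<Rightarrow> real" where
  "dual_fn l = auglag l (auglag_argmax l)"

definition alm_mult :: "(nat \<Rightarrow> real) \<Rightarrow> 'v \<Rightarrow> nat \<Rightarrow> real" where
  "alm_mult l y i = penalty_mult \<beta> (constr i y) (l i)"

text \<open>At \<open>y = auglag_argmax l\<close> this is the gradient of \<open>dual_fn\<close> at \<open>l\<close>, so the dual update of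
  the algorithm is a gradient step of length \<open>\<beta> / 2\<close>.\<close>

definition dual_grad :: "(nat \<Rightarrow> real) \<Rightarrow> 'v \<Rightarrow> nat \<Rightarrow> real" where
  "dual_grad l y i = penalty_grad \<beta> (constr i y) (l i)"

definition sqnorm :: "(nat \<Rightarrow> real) \<Rightarrow> real" where
  "sqnorm x = (\<Sum>i<m. (x i)\<^sup>2)"

definition sqdist :: "(nat \<Rightarrow> real) \<Rightarrow> (nat \<Rightarrow> real) \<Rightarrow> real" where
  "sqdist x x' = (\<Sum>i<m. (x i - x' i)\<^sup>2)"

lemma sqnorm_nonneg: "0 \<le> sqnorm x"
  unfolding sqnorm_def by (simp add: sum_nonneg)

lemma sqdist_nonneg: "0 \<le> sqdist x x'"
  unfolding sqdist_def by (simp add: sum_nonneg)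

lemma auglag_argmax_in: "auglag_argmax l \<in> K"
  and auglag_le_dual: "y \<in> K \<Longrightarrow> auglag l y \<le> dual_fn l"
proof -
  have "\<exists>y. y \<in> K \<and> (\<forall>z\<in>K. auglag l z \<le> auglag l y)"
    using auglag_has_max[of l] unfolding auglag_def by blast
  then have "auglag_argmax l \<in> K \<and> (\<forall>z\<in>K. auglag l z \<le> auglag l (auglag_argmax l))"
    unfolding auglag_argmax_def by (rule someI_ex)
  then show "auglag_argmax l \<in> K" and "y \<in> K \<Longrightarrow> auglag l y \<le> dual_fn l"
    unfolding dual_fn_def by auto
qed

lemma approx_error_nonneg: "y \<in> K \<Longrightarrow> dual_fn l - e \<le> auglag l y \<Longrightarrow> 0 \<le> e"
  using auglag_le_dual[of y l] by linarith

lemma alm_mult_nonneg: "0 \<le> alm_mult l y i"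
  unfolding alm_mult_def by (rule penalty_mult_nonneg)

lemma alm_mult_eq: "alm_mult l y i = l i - \<beta> * dual_grad l y i"
  unfolding alm_mult_def dual_grad_def by (rule penalty_mult_eq_grad[OF beta_pos])

lemma dual_grad_le: "dual_grad l y i \<le> constr i y"
  unfolding dual_grad_def by (rule penalty_grad_le)

lemma sqdist_alm_mult: "sqdist (alm_mult l y) l = \<beta>\<^sup>2 * sqnorm (dual_grad l y)"
  unfolding sqdist_def sqnorm_def alm_mult_eq by (simp add: power_mult_distrib sum_distrib_left)

lemma auglag_eq_lagrangian:
  "auglag l y = lagrangian y (alm_mult l y) + sqdist (alm_mult l y) l / (2 * \<beta>)"
  unfolding auglag_def lagrangian_def sqdist_def alm_mult_def
  by (simp add: penalty_eq_mult[OF beta_pos] sum.distrib sum_divide_distrib)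

lemma auglag_le_lagrangian:
  assumes "\<And>i. i < m \<Longrightarrow> 0 \<le> \<nu> i"
  shows "auglag l y + sqdist \<nu> (alm_mult l y) / (2 * \<beta>) \<le> lagrangian y \<nu> + sqdist \<nu> l / (2 * \<beta>)"
proof -
  have "(\<Sum>i<m. penalty \<beta> (constr i y) (l i) + (\<nu> i - alm_mult l y i)\<^sup>2 / (2 * \<beta>))
      \<le> (\<Sum>i<m. \<nu> i * constr i y + (\<nu> i - l i)\<^sup>2 / (2 * \<beta>))"
    using penalty_le_proximal[OF beta_pos] assms unfolding alm_mult_def by (intro sum_mono) auto
  then show ?thesis
    unfolding auglag_def lagrangian_def sqdist_def by (simp add: sum.distrib sum_divide_distrib)
qed

lemma lagrangian_le_argmax_approx:
  fixes l :: "nat \<Rightarrow> real"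
  assumes "z \<in> K" and "0 < s" "s \<le> 1"
  defines "y \<equiv> auglag_argmax l" and "\<mu> \<equiv> alm_mult l (auglag_argmax l)"
  shows "lagrangian z \<mu> \<le> lagrangian y \<mu> + s * (\<Sum>i<m. \<beta> / 2 * (constr i z + (\<mu> i - l i) / \<beta>)\<^sup>2)"
    (is "_ \<le> _ + s * ?C")
proof -
  define zs where "zs = (1 - s) *\<^sub>R y + s *\<^sub>R z"
  define C where "C = ?C"
  define Q where "Q = sqdist \<mu> l / (2 * \<beta>)"
  have "y \<in> K" unfolding y_def by (rule auglag_argmax_in)
  then have "zs \<in> K" unfolding zs_def using convexD_alt[OF convex_K _ assms(1)] assms(2,3) by simp
  then have "auglag l zs \<le> auglag l y" unfolding y_def dual_fn_def[symmetric] by (rule auglag_le_dual)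
  moreover have "(1 - s) * auglag l y + s * (lagrangian z \<mu> + Q) - s\<^sup>2 * C \<le> auglag l zs"
  proof -
    have "(\<Sum>i<m. (1 - s) * penalty \<beta> (constr i y) (l i)
          + s * (\<mu> i * constr i z + (\<mu> i - l i)\<^sup>2 / (2 * \<beta>))
          - s\<^sup>2 * \<beta> / 2 * (constr i z + (\<mu> i - l i) / \<beta>)\<^sup>2)
        \<le> (\<Sum>i<m. penalty \<beta> (constr i zs) (l i))"
      using penalty_convex_comb_ge[OF beta_pos, of s] assms(2,3)
      unfolding zs_def constr_affine \<mu>_def alm_mult_def y_def by (intro sum_mono) auto
    then show ?thesis
      unfolding auglag_def lagrangian_def sqdist_def zs_def obj_affine C_def Q_def
      by (simp add: sum.distrib sum_subtractf sum_distrib_left sum_divide_distrib algebra_simps)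
  qed
  moreover have "auglag l y = lagrangian y \<mu> + Q"
    unfolding \<mu>_def y_def Q_def by (rule auglag_eq_lagrangian)
  ultimately have "s * lagrangian z \<mu> \<le> s * (lagrangian y \<mu> + s * C)"
    by (simp add: algebra_simps power2_eq_square)
  then show ?thesis using assms(2) unfolding C_def by simp
qed

lemma lagrangian_le_argmax:
  assumes "z \<in> K"
  shows "lagrangian z (alm_mult l (auglag_argmax l))
    \<le> lagrangian (auglag_argmax l) (alm_mult l (auglag_argmax l))"
  using lagrangian_le_argmax_approx[OF assms] by (rule le_of_le_plus_scaled)

lemma dual_le_lagrangian_argmax:
  "dual_fn l' \<le> lagrangian (auglag_argmax l) (alm_mult l (auglag_argmax l))
    + sqdist (alm_mult l (auglag_argmax l)) l' / (2 * \<beta>)"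
proof -
  let ?\<mu> = "alm_mult l (auglag_argmax l)" and ?y' = "auglag_argmax l'"
  have "dual_fn l' + sqdist ?\<mu> (alm_mult l' ?y') / (2 * \<beta>) \<le> lagrangian ?y' ?\<mu> + sqdist ?\<mu> l' / (2 * \<beta>)"
    unfolding dual_fn_def by (rule auglag_le_lagrangian) (rule alm_mult_nonneg)
  moreover have "0 \<le> sqdist ?\<mu> (alm_mult l' ?y') / (2 * \<beta>)" using beta_pos sqdist_nonneg by simp
  moreover have "lagrangian ?y' ?\<mu> \<le> lagrangian (auglag_argmax l) ?\<mu>"
    by (rule lagrangian_le_argmax[OF auglag_argmax_in])
  ultimately show ?thesis by linarith
qed

lemma sqdist_alm_mult_le_gap:
  assumes "y \<in> K"
  shows "sqdist (alm_mult l (auglag_argmax l)) (alm_mult l y) \<le> 2 * \<beta> * (dual_fn l - auglag l y)"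
proof -
  let ?y = "auglag_argmax l"
  let ?\<mu> = "alm_mult l ?y"
  have "auglag l y + sqdist ?\<mu> (alm_mult l y) / (2 * \<beta>) \<le> lagrangian y ?\<mu> + sqdist ?\<mu> l / (2 * \<beta>)"
    by (rule auglag_le_lagrangian) (rule alm_mult_nonneg)
  moreover have "lagrangian y ?\<mu> \<le> lagrangian ?y ?\<mu>" by (rule lagrangian_le_argmax[OF assms])
  moreover have "dual_fn l = lagrangian ?y ?\<mu> + sqdist ?\<mu> l / (2 * \<beta>)"
    unfolding dual_fn_def by (rule auglag_eq_lagrangian)
  ultimately have "sqdist ?\<mu> (alm_mult l y) / (2 * \<beta>) \<le> dual_fn l - auglag l y" by linarith
  then show ?thesis using beta_pos by (simp add: field_simps)
qed

lemma sqdist_dual_step: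
  assumes "\<And>i. i < m \<Longrightarrow> l' i = l i - \<beta> / 2 * dual_grad l y i"
  shows "sqdist l' \<nu> = sqdist l \<nu> - \<beta> * (\<Sum>i<m. dual_grad l y i * (l i - \<nu> i))
    + \<beta>\<^sup>2 / 4 * sqnorm (dual_grad l y)"
proof -
  have "sqdist l' \<nu> = (\<Sum>i<m. (l i - \<nu> i)\<^sup>2 - \<beta> * (dual_grad l y i * (l i - \<nu> i))
      + \<beta>\<^sup>2 / 4 * (dual_grad l y i)\<^sup>2)"
    unfolding sqdist_def
  proof (rule sum.cong[OF refl])
    fix i assume "i \<in> {..<m}"
    then have l': "l' i = l i - \<beta> / 2 * dual_grad l y i" using assms by simp
    show "(l' i - \<nu> i)\<^sup>2 = (l i - \<nu> i)\<^sup>2 - \<beta> * (dual_grad l y i * (l i - \<nu> i))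
      + \<beta>\<^sup>2 / 4 * (dual_grad l y i)\<^sup>2"
      unfolding l' by (simp add: power2_eq_square algebra_simps)
  qed
  then show ?thesis
    unfolding sqdist_def sqnorm_def by (simp add: sum.distrib sum_subtractf sum_distrib_left)
qed

lemma sqdist_midpoint_le:
  assumes "\<And>i. i < m \<Longrightarrow> l' i = (l i + \<mu> i) / 2"
  shows "sqdist \<nu> l' - sqdist \<nu> l \<le> sqdist \<nu> \<mu> - sqdist \<mu> l / 2"
proof -
  have "(\<Sum>i<m. (\<nu> i - l' i)\<^sup>2 - (\<nu> i - l i)\<^sup>2) \<le> (\<Sum>i<m. (\<nu> i - \<mu> i)\<^sup>2 - (\<mu> i - l i)\<^sup>2 / 2)"
  proof (rule sum_mono)
    fix i assume "i \<in> {..<m}"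
    then have "i < m" by simp
    show "(\<nu> i - l' i)\<^sup>2 - (\<nu> i - l i)\<^sup>2 \<le> (\<nu> i - \<mu> i)\<^sup>2 - (\<mu> i - l i)\<^sup>2 / 2"
      unfolding assms[OF \<open>i < m\<close>] by (rule sq_dist_midpoint_le)
  qed
  then show ?thesis unfolding sqdist_def by (simp add: sum_subtractf sum_divide_distrib)
qed

lemma dual_step_le:
  assumes "y \<in> K" and "dual_fn l - e \<le> auglag l y"
    and "\<And>i. i < m \<Longrightarrow> l' i = l i - \<beta> / 2 * dual_grad l y i"
  shows "dual_fn l' \<le> dual_fn l - \<beta> / 4 * sqnorm (dual_grad l y) + e"
proof -
  let ?y = "auglag_argmax l"
  let ?\<mu>' = "alm_mult l ?y" and ?\<mu> = "alm_mult l y"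
  have "sqdist ?\<mu>' l' - sqdist ?\<mu>' l \<le> sqdist ?\<mu>' ?\<mu> - sqdist ?\<mu> l / 2"
    using assms(3) alm_mult_eq[of l y] by (intro sqdist_midpoint_le) simp
  also have "\<dots> \<le> 2 * \<beta> * e - \<beta>\<^sup>2 / 2 * sqnorm (dual_grad l y)"
  proof -
    have "2 * \<beta> * (dual_fn l - auglag l y) \<le> 2 * \<beta> * e"
      using assms(2) beta_pos by (intro mult_left_mono) auto
    then show ?thesis
      using sqdist_alm_mult_le_gap[OF assms(1), of l] sqdist_alm_mult[of l y] by simp
  qed
  finally have step: "sqdist ?\<mu>' l' - sqdist ?\<mu>' l \<le> 2 * \<beta> * e - \<beta>\<^sup>2 / 2 * sqnorm (dual_grad l y)" .
  have "dual_fn l' \<le> lagrangian ?y ?\<mu>' + sqdist ?\<mu>' l' / (2 * \<beta>)"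
    by (rule dual_le_lagrangian_argmax)
  moreover have "dual_fn l = lagrangian ?y ?\<mu>' + sqdist ?\<mu>' l / (2 * \<beta>)"
    unfolding dual_fn_def by (rule auglag_eq_lagrangian)
  ultimately have "dual_fn l' - dual_fn l \<le> (sqdist ?\<mu>' l' - sqdist ?\<mu>' l) / (2 * \<beta>)"
    by (simp add: diff_divide_distrib)
  also have "\<dots> \<le> (2 * \<beta> * e - \<beta>\<^sup>2 / 2 * sqnorm (dual_grad l y)) / (2 * \<beta>)"
    using step beta_pos by (simp add: divide_right_mono)
  also have "\<dots> = e - \<beta> / 4 * sqnorm (dual_grad l y)"
    using beta_pos by (simp add: field_simps power2_eq_square)
  finally show ?thesis by simp
qed


lemma constr_ge_of_sqnorm_grad_le:
  assumes "0 \<le> \<epsilon>" and "sqnorm (dual_grad l y) \<le> \<epsilon>\<^sup>2" and "i < m"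
  shows "- \<epsilon> \<le> constr i y"
proof -
  have "(dual_grad l y i)\<^sup>2 \<le> sqnorm (dual_grad l y)"
    unfolding sqnorm_def using assms(3) by (intro member_le_sum) auto
  then have "(- dual_grad l y i)\<^sup>2 \<le> \<epsilon>\<^sup>2" using assms(2) by simp
  then have "- dual_grad l y i \<le> \<epsilon>" using assms(1) by (rule power2_le_imp_le)
  then show ?thesis using dual_grad_le[of l y i] by simp
qed

lemma auglag_le_obj_plus:
  assumes "0 < a"
  shows "auglag l y \<le> obj y + (a * sqnorm l + sqnorm (dual_grad l y) / (4 * a))"
proof -
  have "(\<Sum>i<m. penalty \<beta> (constr i y) (l i)) \<le> (\<Sum>i<m. a * (l i)\<^sup>2 + (dual_grad l y i)\<^sup>2 / (4 * a))"
  proof (rule sum_mono)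
    fix i
    have "penalty \<beta> (constr i y) (l i) \<le> l i * dual_grad l y i"
      unfolding dual_grad_def penalty_eq_grad[OF beta_pos] using beta_pos by simp
    also have "\<dots> \<le> a * (l i)\<^sup>2 + (dual_grad l y i)\<^sup>2 / (4 * a)"
      by (rule mult_le_weighted_squares[OF assms])
    finally show "penalty \<beta> (constr i y) (l i) \<le> a * (l i)\<^sup>2 + (dual_grad l y i)\<^sup>2 / (4 * a)" .
  qed
  then show ?thesis
    unfolding auglag_def sqnorm_def by (simp add: sum.distrib sum_distrib_left sum_divide_distrib)
qed

lemma sqnorm_le_sqdist: "sqnorm x \<le> 2 * sqnorm \<nu> + 2 * sqdist x \<nu>"
proof -
  have "(x i)\<^sup>2 \<le> 2 * (\<nu> i)\<^sup>2 + 2 * (x i - \<nu> i)\<^sup>2" for i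
    using zero_le_power2[of "x i - 2 * \<nu> i"] by (simp add: power2_eq_square algebra_simps)
  then have "sqnorm x \<le> (\<Sum>i<m. 2 * (\<nu> i)\<^sup>2 + 2 * (x i - \<nu> i)\<^sup>2)"
    unfolding sqnorm_def by (intro sum_mono) auto
  then show ?thesis unfolding sqnorm_def sqdist_def by (simp add: sum.distrib sum_distrib_left)
qed

end

locale aug_lagrangian_saddle = aug_lagrangian K obj constr m \<beta>
  for K :: "'v::real_vector set" and obj constr m \<beta> +
  fixes opt :: real and mult :: "nat \<Rightarrow> real" and y_opt :: 'v
  assumes y_opt_in: "y_opt \<in> K"
    and y_opt_feasible: "\<And>i. i < m \<Longrightarrow> 0 \<le> constr i y_opt"
    and opt_le_obj: "opt \<le> obj y_opt"
    and mult_nonneg: "\<And>i. i < m \<Longrightarrow> 0 \<le> mult i"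
    and obj_plus_mult_le: "\<And>z. z \<in> K \<Longrightarrow> obj z + (\<Sum>i<m. mult i * constr i z) \<le> opt"
begin

lemma lagrangian_mult_le: "z \<in> K \<Longrightarrow> lagrangian z mult \<le> opt"
  unfolding lagrangian_def by (rule obj_plus_mult_le)

lemma opt_le_dual: "opt \<le> dual_fn l"
proof -
  have "0 \<le> (\<Sum>i<m. penalty \<beta> (constr i y_opt) (l i))"
    using penalty_nonneg[OF beta_pos] y_opt_feasible by (intro sum_nonneg) auto
  then have "opt \<le> auglag l y_opt" unfolding auglag_def using opt_le_obj by simp
  then show ?thesis using auglag_le_dual[OF y_opt_in] by (rule order_trans)
qed

lemma dual_mult_le_opt: "dual_fn mult \<le> opt"
proof -
  let ?y = "auglag_argmax mult"
  have "(\<Sum>i<m. penalty \<beta> (constr i ?y) (mult i)) \<le> (\<Sum>i<m. mult i * constr i ?y)"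
    using penalty_le_mult[OF beta_pos] mult_nonneg by (intro sum_mono) auto
  then have "dual_fn mult \<le> lagrangian ?y mult"
    unfolding dual_fn_def auglag_def lagrangian_def by simp
  also have "\<dots> \<le> opt" by (rule lagrangian_mult_le[OF auglag_argmax_in])
  finally show ?thesis .
qed

text \<open>Compare \<open>y\<close> with the midpoint of \<open>y\<close> and the feasible point \<open>y_opt\<close>: the penalty gains a
  multiple of the squared gradient there, which an approximate maximiser cannot afford.\<close>

lemma opt_plus_grad_le_auglag:
  assumes "y \<in> K" and "dual_fn l - e \<le> auglag l y"
  shows "opt + \<beta> / 4 * sqnorm (dual_grad l y) - 2 * e \<le> auglag l y"
proof -
  define z where "z = (1 - 1 / 2) *\<^sub>R y + (1 / 2 :: real) *\<^sub>R y_opt"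
  have "z \<in> K" unfolding z_def by (rule convexD_alt[OF convex_K assms(1) y_opt_in]) simp_all
  have "(\<Sum>i<m. (1 - 1 / 2) * penalty \<beta> (constr i y) (l i)
        + 1 / 2 * (1 - 1 / 2) * (alm_mult l y i - l i)\<^sup>2 / (2 * \<beta>))
      \<le> (\<Sum>i<m. penalty \<beta> (constr i z) (l i))"
    unfolding z_def constr_affine alm_mult_def
    by (intro sum_mono penalty_convex_comb_feasible_ge[OF beta_pos] y_opt_feasible) auto
  moreover have "(\<Sum>i<m. (alm_mult l y i - l i)\<^sup>2) / (8 * \<beta>) = \<beta> / 8 * sqnorm (dual_grad l y)"
    using sqdist_alm_mult[of l y] beta_pos unfolding sqdist_def by (simp add: power2_eq_square)
  ultimately have "1 / 2 * (\<Sum>i<m. penalty \<beta> (constr i y) (l i)) + \<beta> / 8 * sqnorm (dual_grad l y)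
      \<le> (\<Sum>i<m. penalty \<beta> (constr i z) (l i))"
    by (simp add: sum.distrib sum_distrib_left sum_divide_distrib)
  moreover have "obj z = 1 / 2 * obj y + 1 / 2 * obj y_opt" unfolding z_def obj_affine by simp
  ultimately have "1 / 2 * auglag l y + 1 / 2 * opt + \<beta> / 8 * sqnorm (dual_grad l y) \<le> auglag l z"
    unfolding auglag_def distrib_left using opt_le_obj by linarith
  moreover have "auglag l z \<le> dual_fn l" by (rule auglag_le_dual[OF \<open>z \<in> K\<close>])
  ultimately show ?thesis using assms(2) by simp
qed

lemma grad_le_dual_gap:
  assumes "y \<in> K" and "dual_fn l - e \<le> auglag l y"
  shows "\<beta> / 4 * sqnorm (dual_grad l y) \<le> dual_fn l - opt + 2 * e"
  using opt_plus_grad_le_auglag[OF assms] auglag_le_dual[OF assms(1), of l] by linarith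

lemma grad_inner_mult_ge:
  assumes "y \<in> K" and "dual_fn l - e \<le> auglag l y"
  shows "- \<beta> / 4 * sqnorm (dual_grad l y) - 2 * e \<le> (\<Sum>i<m. dual_grad l y i * (alm_mult l y i - mult i))"
proof -
  let ?h = "dual_grad l y" and ?\<mu> = "alm_mult l y"
  have "opt - \<beta> / 4 * sqnorm ?h - 2 * e \<le> lagrangian y ?\<mu>"
    using opt_plus_grad_le_auglag[OF assms] auglag_eq_lagrangian[of l y] sqdist_alm_mult[of l y] beta_pos
    by (simp add: power2_eq_square)
  moreover have "lagrangian y mult \<le> opt" by (rule lagrangian_mult_le[OF assms(1)])
  moreover have "lagrangian y ?\<mu> - lagrangian y mult \<le> (\<Sum>i<m. ?h i * (?\<mu> i - mult i))"
  proof -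
    have "(\<Sum>i<m. ?\<mu> i * constr i y - mult i * constr i y) \<le> (\<Sum>i<m. ?h i * (?\<mu> i - mult i))"
    proof (rule sum_mono)
      fix i assume "i \<in> {..<m}"
      then have "?h i * mult i \<le> mult i * constr i y"
        using mult_right_mono[OF dual_grad_le mult_nonneg] by (simp add: mult.commute)
      moreover have "?h i * ?\<mu> i = ?\<mu> i * constr i y"
        using penalty_grad_mult[OF beta_pos] unfolding dual_grad_def alm_mult_def
          by (simp add: mult.commute)
      moreover have "?h i * (?\<mu> i - mult i) = ?h i * ?\<mu> i - ?h i * mult i" by (rule right_diff_distrib)
      ultimately show "?\<mu> i * constr i y - mult i * constr i y \<le> ?h i * (?\<mu> i - mult i)"
        by linarith
    qed
    then show ?thesis unfolding lagrangian_def by (simp add: sum_subtractf)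
  qed
  ultimately show ?thesis by linarith
qed

lemma sqdist_mult_dual_step_le:
  assumes "y \<in> K" and "dual_fn l - e \<le> auglag l y"
    and "\<And>i. i < m \<Longrightarrow> l' i = l i - \<beta> / 2 * dual_grad l y i"
  shows "sqdist l' mult \<le> sqdist l mult - \<beta>\<^sup>2 / 2 * sqnorm (dual_grad l y) + 2 * \<beta> * e"
proof -
  let ?h = "dual_grad l y"
  have "(\<Sum>i<m. ?h i * (l i - mult i)) = (\<Sum>i<m. \<beta> * (?h i)\<^sup>2 + ?h i * (alm_mult l y i - mult i))"
    unfolding alm_mult_eq by (intro sum.cong) (simp_all add: algebra_simps power2_eq_square)
  also have "\<dots> = \<beta> * sqnorm ?h + (\<Sum>i<m. ?h i * (alm_mult l y i - mult i))"
    unfolding sqnorm_def by (simp add: sum.distrib sum_distrib_left)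
  finally have "\<beta> * (3 * \<beta> / 4 * sqnorm ?h - 2 * e) \<le> \<beta> * (\<Sum>i<m. ?h i * (l i - mult i))"
    using grad_inner_mult_ge[OF assms(1,2)] beta_pos by (intro mult_left_mono) auto
  then show ?thesis
    using sqdist_dual_step[OF assms(3), of mult] by (simp add: algebra_simps power2_eq_square)
qed

lemma dual_gap_le_inner:
  assumes "y \<in> K" and "dual_fn l - e \<le> auglag l y"
  shows "dual_fn l - opt \<le> e + (\<Sum>i<m. dual_grad l y i * (l i - mult i))"
proof -
  have "auglag l y - (\<Sum>i<m. dual_grad l y i * (l i - mult i)) \<le> auglag mult y"
  proof -
    have "(\<Sum>i<m. penalty \<beta> (constr i y) (l i) - dual_grad l y i * (l i - mult i))
        \<le> (\<Sum>i<m. penalty \<beta> (constr i y) (mult i))"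
      using penalty_subgradient[OF beta_pos] unfolding dual_grad_def
      by (intro sum_mono) (simp add: algebra_simps)
    then show ?thesis unfolding auglag_def by (simp add: sum_subtractf)
  qed
  moreover have "auglag mult y \<le> opt"
    using auglag_le_dual[OF assms(1)] dual_mult_le_opt by (rule order_trans)
  ultimately show ?thesis using assms(2) by simp
qed

lemma dual_gap_le_sqdist_decrease:
  assumes "y \<in> K" and "dual_fn l - e \<le> auglag l y"
    and "\<And>i. i < m \<Longrightarrow> l' i = l i - \<beta> / 2 * dual_grad l y i"
  shows "dual_fn l' - opt \<le> 2 * e + (sqdist l mult - sqdist l' mult) / \<beta>"
proof -
  have "(sqdist l mult - sqdist l' mult) / \<beta>
      = (\<Sum>i<m. dual_grad l y i * (l i - mult i)) - \<beta> / 4 * sqnorm (dual_grad l y)"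
    using sqdist_dual_step[OF assms(3), of mult] beta_pos by (simp add: field_simps power2_eq_square)
  then show ?thesis using dual_step_le[OF assms] dual_gap_le_inner[OF assms(1,2)] by simp
qed


definition mult_dist_bound :: "real \<Rightarrow> real" where
  "mult_dist_bound C = sqnorm mult + 4 * \<beta> * C"

definition grad_bound :: "real \<Rightarrow> real" where
  "grad_bound C = 4 / \<beta> * (42 * C + 2 * mult_dist_bound C / \<beta>)"

definition iteration_bound :: "real \<Rightarrow> real" where
  "iteration_bound C = 2 + grad_bound C
    + 4 * ((2 * sqnorm mult + 2 * mult_dist_bound C + 1) * grad_bound C + C)"

lemma grad_bound_nonneg: "0 \<le> C \<Longrightarrow> 0 \<le> grad_bound C"
  unfolding grad_bound_def mult_dist_bound_def using beta_pos sqnorm_nonneg[of mult] by simp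

lemma iteration_bound_ge:
  assumes "0 \<le> C"
  shows "2 \<le> iteration_bound C" and "grad_bound C \<le> iteration_bound C"
    and "4 * ((2 * sqnorm mult + 2 * mult_dist_bound C + 1) * grad_bound C + C) \<le> iteration_bound C"
proof -
  have "0 \<le> mult_dist_bound C"
    unfolding mult_dist_bound_def using assms beta_pos sqnorm_nonneg[of mult] by simp
  then have "0 \<le> (2 * sqnorm mult + 2 * mult_dist_bound C + 1) * grad_bound C"
    using grad_bound_nonneg[OF assms] sqnorm_nonneg[of mult] by simp
  then show "2 \<le> iteration_bound C" and "grad_bound C \<le> iteration_bound C"
    and "4 * ((2 * sqnorm mult + 2 * mult_dist_bound C + 1) * grad_bound C + C) \<le> iteration_bound C"
    unfolding iteration_bound_def using grad_bound_nonneg[OF assms] assms by simp_all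
qed

end

lemma sum_inv_sq_le_telescope:
  assumes "1 \<le> k" and "k \<le> n"
  shows "(\<Sum>j\<in>{k..<n}. 1 / (real j)\<^sup>2) \<le> 2 / real k - 2 / real n"
  using assms(2)
proof (induction n rule: dec_induct)
  case (step n)
  have n: "1 \<le> real n" using step assms(1) by simp
  have "1 / (real n)\<^sup>2 = 2 / (2 * (real n)\<^sup>2)" by simp
  also have "\<dots> \<le> 2 / (real n * (real n + 1))"
    using n by (intro divide_left_mono) (auto simp: power2_eq_square)
  also have "\<dots> = 2 / real n - 2 / real (Suc n)" using n by (simp add: field_simps)
  finally show ?case using step by (simp add: sum.atLeastLessThan_Suc)
qed simp

lemma sum_inv_sq_le:
  assumes "1 \<le> k" shows "(\<Sum>j\<in>{k..<n}. 1 / (real j)\<^sup>2) \<le> 2 / real k"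
proof (cases "k \<le> n")
  case True
  have "0 \<le> 2 / real n" by simp
  then show ?thesis using sum_inv_sq_le_telescope[OF assms True] by linarith
qed simp

locale alm_iterates = aug_lagrangian_saddle K obj constr m \<beta> opt mult y_opt
  for K :: "'v::real_vector set" and obj constr m \<beta> opt mult y_opt +
  fixes C :: real and eps :: "nat \<Rightarrow> real" and T :: nat
    and lam :: "nat \<Rightarrow> nat \<Rightarrow> real" and ys :: "nat \<Rightarrow> 'v"
  assumes C_nonneg: "0 \<le> C"
    and eps_le: "\<And>t. 1 \<le> t \<Longrightarrow> eps t \<le> C / (real t)\<^sup>2"
    and lam_init: "\<And>i. i < m \<Longrightarrow> lam 1 i = 0"
    and ys_in: "\<And>t. 1 \<le> t \<Longrightarrow> t \<le> T \<Longrightarrow> ys (t + 1) \<in> K"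
    and ys_approx_max:
      "\<And>t. 1 \<le> t \<Longrightarrow> t \<le> T \<Longrightarrow> dual_fn (lam t) - eps t \<le> auglag (lam t) (ys (t + 1))"
    and lam_step: "\<And>t i. 1 \<le> t \<Longrightarrow> t \<le> T \<Longrightarrow> i < m \<Longrightarrow>
      lam (t + 1) i = lam t i - \<beta> / 2 * dual_grad (lam t) (ys (t + 1)) i"
begin

lemma iterate_step:
  assumes "1 \<le> t" "t \<le> T"
  shows "ys (t + 1) \<in> K" and "dual_fn (lam t) - eps t \<le> auglag (lam t) (ys (t + 1))"
    and "\<And>i. i < m \<Longrightarrow> lam (t + 1) i = lam t i - \<beta> / 2 * dual_grad (lam t) (ys (t + 1)) i"
  using assms ys_in ys_approx_max lam_step by auto

lemma eps_nonneg: "1 \<le> t \<Longrightarrow> t \<le> T \<Longrightarrow> 0 \<le> eps t"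
  using approx_error_nonneg[OF iterate_step(1,2)] .

lemma eps_sum_le:
  assumes "1 \<le> k" shows "(\<Sum>j\<in>{k..<n}. eps j) \<le> 2 * C / real k"
proof -
  have "(\<Sum>j\<in>{k..<n}. eps j) \<le> (\<Sum>j\<in>{k..<n}. C * (1 / (real j)\<^sup>2))"
    using eps_le assms by (intro sum_mono) auto
  also have "\<dots> = C * (\<Sum>j\<in>{k..<n}. 1 / (real j)\<^sup>2)" by (simp add: sum_distrib_left)
  also have "\<dots> \<le> C * (2 / real k)" using sum_inv_sq_le[OF assms] C_nonneg by (intro mult_left_mono)
  finally show ?thesis by (simp add: mult.commute)
qed

lemma sqdist_mult_le:
  assumes "1 \<le> t" and "t \<le> T + 1"
  shows "sqdist (lam t) mult \<le> mult_dist_bound C"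
proof -
  have "sqdist (lam t) mult \<le> sqnorm mult + 2 * \<beta> * (\<Sum>j\<in>{1..<t}. eps j)"
    using assms(1)
  proof (induction t rule: dec_induct)
    case base
    have "sqdist (lam 1) mult = sqnorm mult"
      unfolding sqdist_def sqnorm_def using lam_init by (intro sum.cong) auto
    then show ?case by simp
  next
    case (step n)
    then have "1 \<le> n" "n \<le> T" using assms(2) by auto
    have "sqdist (lam (n + 1)) mult \<le> sqdist (lam n) mult + 2 * \<beta> * eps n"
    proof -
      have "0 \<le> \<beta>\<^sup>2 / 2 * sqnorm (dual_grad (lam n) (ys (n + 1)))" using sqnorm_nonneg by simp
      then show ?thesis using sqdist_mult_dual_step_le[OF iterate_step[OF \<open>1 \<le> n\<close> \<open>n \<le> T\<close>]] by linarith
    qed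
    then show ?case using step.IH \<open>1 \<le> n\<close> by (simp add: sum.atLeastLessThan_Suc algebra_simps)
  qed
  also have "\<dots> \<le> mult_dist_bound C"
    using eps_sum_le[of 1 t] beta_pos unfolding mult_dist_bound_def by simp
  finally show ?thesis .
qed

lemma dual_le_dual_plus_eps:
  assumes "1 \<le> k" and "k \<le> t" and "t \<le> T + 1"
  shows "dual_fn (lam t) \<le> dual_fn (lam k) + (\<Sum>j\<in>{k..<t}. eps j)"
  using assms(2)
proof (induction t rule: dec_induct)
  case (step j)
  then have "1 \<le> j" "j \<le> T" using assms by auto
  have "0 \<le> \<beta> / 4 * sqnorm (dual_grad (lam j) (ys (j + 1)))" using beta_pos sqnorm_nonneg by simp
  then have "dual_fn (lam (j + 1)) \<le> dual_fn (lam j) + eps j"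
    using dual_step_le[OF iterate_step[OF \<open>1 \<le> j\<close> \<open>j \<le> T\<close>]] by linarith
  then show ?case using step.IH step.hyps(1) by (simp add: sum.atLeastLessThan_Suc)
qed simp

lemma dual_gap_sum_le:
  assumes "1 \<le> k" and "k \<le> n" and "n \<le> T"
  shows "(\<Sum>t\<in>{k..<n}. dual_fn (lam (t + 1)) - opt)
    \<le> 2 * (\<Sum>t\<in>{k..<n}. eps t) + (sqdist (lam k) mult - sqdist (lam n) mult) / \<beta>"
  using assms(2,3)
proof (induction n rule: dec_induct)
  case (step j)
  then have "1 \<le> j" "j \<le> T" using assms(1) by auto
  have "dual_fn (lam (j + 1)) - opt \<le> 2 * eps j + (sqdist (lam j) mult - sqdist (lam (j + 1)) mult) / \<beta>"
    by (rule dual_gap_le_sqdist_decrease[OF iterate_step[OF \<open>1 \<le> j\<close> \<open>j \<le> T\<close>]])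
  then show ?case
    using step.IH[OF \<open>j \<le> T\<close>] step.hyps(1) by (simp add: sum.atLeastLessThan_Suc diff_divide_distrib)
qed simp

text \<open>Averaging over the second half of the run turns the telescoping bound into a bound on the
  last dual gap; monotonicity of the dual values up to the errors \<open>eps\<close> makes the average dominate it.\<close>

lemma dual_gap_avg_le:
  assumes "1 \<le> k" and "k < T"
  defines "E \<equiv> \<Sum>j\<in>{k..<T}. eps j"
  shows "real (T - k) * (dual_fn (lam T) - opt - E) \<le> 2 * E + mult_dist_bound C / \<beta>"
proof -
  have "dual_fn (lam T) - opt - E \<le> dual_fn (lam (t + 1)) - opt" if "t \<in> {k..<T}" for t
  proof -
    have "dual_fn (lam T) \<le> dual_fn (lam (t + 1)) + (\<Sum>j\<in>{t + 1..<T}. eps j)"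
      using dual_le_dual_plus_eps[of "t + 1" T] that assms(1) by simp
    moreover have "(\<Sum>j\<in>{t + 1..<T}. eps j) \<le> E"
      unfolding E_def using that assms(1) eps_nonneg by (intro sum_mono2) auto
    ultimately show ?thesis by simp
  qed
  then have "real (T - k) * (dual_fn (lam T) - opt - E) \<le> (\<Sum>t\<in>{k..<T}. dual_fn (lam (t + 1)) - opt)"
    using sum_mono[of "{k..<T}" "\<lambda>_. dual_fn (lam T) - opt - E"] by simp
  also have "\<dots> \<le> 2 * E + (sqdist (lam k) mult - sqdist (lam T) mult) / \<beta>"
    unfolding E_def using dual_gap_sum_le[OF assms(1)] assms(2) by simp
  also have "\<dots> \<le> 2 * E + mult_dist_bound C / \<beta>"
    using sqdist_mult_le[of k] sqdist_nonneg[of "lam T" mult] assms beta_pos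
    by (simp add: divide_right_mono)
  finally show ?thesis .
qed

lemma last_dual_gap_le:
  assumes "2 \<le> T"
  shows "dual_fn (lam T) - opt \<le> (40 * C + 2 * mult_dist_bound C / \<beta>) / real T"
proof -
  define k where "k = T div 2"
  define E where "E = (\<Sum>j\<in>{k..<T}. eps j)"
  define R where "R = mult_dist_bound C / \<beta>"
  have k: "1 \<le> k" "k < T" using assms unfolding k_def by auto
  have T: "real T \<le> 4 * real k" "real T / 2 \<le> real (T - k)" "1 \<le> real T"
    using assms unfolding k_def by linarith+
  have "0 \<le> E" unfolding E_def using eps_nonneg k by (intro sum_nonneg) auto
  have "0 \<le> R" unfolding R_def mult_dist_bound_def using sqnorm_nonneg[of mult] C_nonneg beta_pos
    by simp
  have E_le: "E \<le> 8 * C / real T"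
  proof -
    have "E \<le> 2 * C / real k" unfolding E_def by (rule eps_sum_le[OF k(1)])
    also have "\<dots> = 8 * C / (4 * real k)" by simp
    also have "\<dots> \<le> 8 * C / real T" using T k C_nonneg by (intro divide_left_mono) auto
    finally show ?thesis .
  qed
  have "dual_fn (lam T) - opt - E \<le> (2 * E + R) / real (T - k)"
    using dual_gap_avg_le[OF k] k(2) unfolding E_def R_def by (simp add: pos_le_divide_eq mult.commute)
  also have "\<dots> \<le> (2 * E + R) / (real T / 2)"
    using T k \<open>0 \<le> E\<close> \<open>0 \<le> R\<close> by (intro divide_left_mono) auto
  also have "\<dots> \<le> 2 * (16 * C + R) / real T"
  proof -
    have "8 * C / real T \<le> 8 * C / 1" using T(3) C_nonneg by (intro divide_left_mono) auto
    then have "2 * E \<le> 16 * C" using E_le by simp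
    then show ?thesis using T(3) by (simp add: divide_right_mono)
  qed
  finally show ?thesis using E_le T(3) unfolding R_def by (simp add: field_simps)
qed

lemma last_grad_le:
  assumes "2 \<le> T"
  shows "sqnorm (dual_grad (lam T) (ys (T + 1))) \<le> grad_bound C / real T"
proof -
  have T: "1 \<le> T" "T \<le> T" and "1 \<le> real T" using assms by auto
  have "eps T \<le> C / (real T)\<^sup>2" using eps_le T by simp
  also have "\<dots> \<le> C / real T"
    using \<open>1 \<le> real T\<close> C_nonneg by (intro divide_left_mono) (auto simp: power2_eq_square)
  finally have "\<beta> / 4 * sqnorm (dual_grad (lam T) (ys (T + 1)))
      \<le> (40 * C + 2 * mult_dist_bound C / \<beta>) / real T + 2 * (C / real T)"
    using grad_le_dual_gap[OF iterate_step(1,2)[OF T]] last_dual_gap_le[OF assms] by linarith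
  also have "\<dots> = \<beta> / 4 * (grad_bound C / real T)"
    unfolding grad_bound_def using beta_pos \<open>1 \<le> real T\<close> by (simp add: field_simps)
  finally show ?thesis by (rule mult_left_le_imp_le) (use beta_pos in simp)
qed

context
  fixes \<epsilon> :: real
  assumes epsilon_pos: "0 < \<epsilon>" and epsilon_lt_1: "\<epsilon> < 1"
    and T_large: "iteration_bound C / \<epsilon>\<^sup>2 \<le> real T"
begin

lemma iteration_bound_le_T: "iteration_bound C \<le> real T"
  and inverse_T_le: "1 / real T \<le> \<epsilon>\<^sup>2 / iteration_bound C"
proof -
  have N: "0 < iteration_bound C" using iteration_bound_ge(1)[OF C_nonneg] by simp
  have "0 < \<epsilon>\<^sup>2" "\<epsilon>\<^sup>2 \<le> 1" using epsilon_pos epsilon_lt_1 by (simp_all add: power_le_one)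
  then have "iteration_bound C \<le> iteration_bound C / \<epsilon>\<^sup>2" using N by (simp add: le_divide_eq)
  then show T: "iteration_bound C \<le> real T" using T_large by simp
  have "iteration_bound C \<le> real T * \<epsilon>\<^sup>2" using T_large \<open>0 < \<epsilon>\<^sup>2\<close> by (simp add: divide_le_eq)
  then show "1 / real T \<le> \<epsilon>\<^sup>2 / iteration_bound C" using N T by (simp add: field_simps)
qed

lemma T_ge_2: "2 \<le> T"
  using iteration_bound_le_T iteration_bound_ge(1)[OF C_nonneg] by linarith

lemma last_grad_le_eps:
  "sqnorm (dual_grad (lam T) (ys (T + 1))) \<le> grad_bound C * \<epsilon>\<^sup>2 / iteration_bound C"
proof -
  have "sqnorm (dual_grad (lam T) (ys (T + 1))) \<le> grad_bound C * (1 / real T)"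
    using last_grad_le[OF T_ge_2] by simp
  also have "\<dots> \<le> grad_bound C * (\<epsilon>\<^sup>2 / iteration_bound C)"
    using inverse_T_le grad_bound_nonneg[OF C_nonneg] by (intro mult_left_mono)
  finally show ?thesis by simp
qed

lemma last_constr_ge: "i < m \<Longrightarrow> - \<epsilon> \<le> constr i (ys (T + 1))"
proof (rule constr_ge_of_sqnorm_grad_le)
  have "grad_bound C * \<epsilon>\<^sup>2 \<le> iteration_bound C * \<epsilon>\<^sup>2"
    using iteration_bound_ge(2)[OF C_nonneg] by (intro mult_right_mono) auto
  then have "grad_bound C * \<epsilon>\<^sup>2 / iteration_bound C \<le> \<epsilon>\<^sup>2"
    using iteration_bound_ge(1)[OF C_nonneg] by (simp add: divide_le_eq mult.commute)
  then show "sqnorm (dual_grad (lam T) (ys (T + 1))) \<le> \<epsilon>\<^sup>2" using last_grad_le_eps by linarith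
qed (use epsilon_pos in simp_all)

lemma last_eps_le: "eps T \<le> C * \<epsilon> / iteration_bound C"
proof -
  have T: "1 \<le> T" "1 \<le> real T" using T_ge_2 by auto
  have "eps T \<le> C / (real T)\<^sup>2" using eps_le T by simp
  also have "\<dots> \<le> C * (1 / real T)"
    using T C_nonneg by (simp add: divide_left_mono power2_eq_square mult_le_cancel_left1)
  also have "\<dots> \<le> C * (\<epsilon>\<^sup>2 / iteration_bound C)" using inverse_T_le C_nonneg by (intro mult_left_mono)
  also have "\<dots> \<le> C * (\<epsilon> / iteration_bound C)"
    using epsilon_pos epsilon_lt_1 iteration_bound_ge(1)[OF C_nonneg] C_nonneg
    by (intro mult_left_mono divide_right_mono) (auto simp: power2_eq_square)
  finally show ?thesis by simp
qed

text \<open>The objective loses at most \<open>\<Sum> l\<^sub>i h\<^sub>i\<close> against the augmented Lagrangian, where \<open>l\<close> stays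
  bounded and the gradient \<open>h\<close> is small; the weight \<open>a\<close> balances the two terms of the bound
  \<open>l\<^sub>i h\<^sub>i \<le> a l\<^sub>i\<^sup>2 + h\<^sub>i\<^sup>2 / (4 a)\<close>.\<close>

lemma last_obj_ge: "opt - \<epsilon> \<le> obj (ys (T + 1))"
proof -
  let ?N = "iteration_bound C" and ?G = "grad_bound C" and ?h = "dual_grad (lam T) (ys (T + 1))"
  define \<Lambda> where "\<Lambda> = 2 * sqnorm mult + 2 * mult_dist_bound C + 1"
  define a where "a = \<epsilon> / (4 * \<Lambda>)"
  have N: "0 < ?N" "4 * (\<Lambda> * ?G + C) \<le> ?N"
    unfolding \<Lambda>_def using iteration_bound_ge[OF C_nonneg] by auto
  have T: "1 \<le> T" "T \<le> T" using T_ge_2 by auto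
  have "sqnorm (lam T) \<le> \<Lambda>"
    using sqnorm_le_sqdist[of "lam T" mult] sqdist_mult_le[of T] T unfolding \<Lambda>_def by simp
  moreover have "1 \<le> \<Lambda>"
    unfolding \<Lambda>_def mult_dist_bound_def using sqnorm_nonneg[of mult] beta_pos C_nonneg by simp
  ultimately have "a * sqnorm (lam T) \<le> \<epsilon> / 4" and "0 < a"
    unfolding a_def using epsilon_pos by (simp_all add: field_simps)
  have "sqnorm ?h / (4 * a) = sqnorm ?h * (\<Lambda> / \<epsilon>)" unfolding a_def using epsilon_pos by simp
  also have "\<dots> \<le> ?G * \<epsilon>\<^sup>2 / ?N * (\<Lambda> / \<epsilon>)"
    using last_grad_le_eps epsilon_pos \<open>1 \<le> \<Lambda>\<close> by (intro mult_right_mono) auto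
  finally have "sqnorm ?h / (4 * a) \<le> \<Lambda> * ?G * \<epsilon> / ?N"
    using epsilon_pos by (simp add: power2_eq_square mult_ac)
  moreover have "eps T \<le> C * \<epsilon> / ?N" by (rule last_eps_le)
  moreover have "C * \<epsilon> / ?N + \<Lambda> * ?G * \<epsilon> / ?N \<le> \<epsilon> / 4"
  proof -
    have "C * \<epsilon> / ?N + \<Lambda> * ?G * \<epsilon> / ?N = \<epsilon> * (4 * (\<Lambda> * ?G + C)) / (4 * ?N)"
      using N(1) by (simp add: field_simps)
    also have "\<dots> \<le> \<epsilon> * ?N / (4 * ?N)"
      using N epsilon_pos by (intro divide_right_mono mult_left_mono) auto
    finally show ?thesis using N(1) by simp
  qed
  moreover have "opt - eps T \<le> auglag (lam T) (ys (T + 1))"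
    using opt_le_dual[of "lam T"] ys_approx_max[OF T(1,2)] by linarith
  moreover have "auglag (lam T) (ys (T + 1))
      \<le> obj (ys (T + 1)) + (a * sqnorm (lam T) + sqnorm ?h / (4 * a))"
    by (rule auglag_le_obj_plus[OF \<open>0 < a\<close>])
  ultimately show ?thesis using \<open>a * sqnorm (lam T) \<le> \<epsilon> / 4\<close> epsilon_pos by linarith
qed

end

end

section \<open>Occupancy measures of discounted MDPs\<close>

lemma sum_UNIV_pair:
  "(\<Sum>x\<in>(UNIV :: ('s::finite \<times> 'a::finite) set). f x) = (\<Sum>s\<in>UNIV. \<Sum>a\<in>UNIV. f (s, a))"
  by (simp add: sum.cartesian_product)

definition point_mass :: "'x \<Rightarrow> 'x \<Rightarrow> real" where
  "point_mass y z = (if z = y then 1 else 0)"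

lemma is_distr_point_mass: "is_distr (point_mass (y :: 'x::finite))"
  unfolding is_distr_def point_mass_def by simp

lemma sa_dist_Suc:
  "sa_dist P pol d (Suc n) x
    = (\<Sum>y\<in>UNIV. sa_dist P pol d n y * P (fst y) (snd y) (fst x)) * pol (fst x) (snd x)"
  by (cases x) simp

lemma sa_dist_nonneg:
  assumes "is_kernel P" and "is_policy pol" and "\<And>x. 0 \<le> d x"
  shows "0 \<le> sa_dist P pol d n x"
proof (induction n arbitrary: x)
  case (Suc n)
  have "\<And>y. 0 \<le> P (fst y) (snd y) (fst x)" and "0 \<le> pol (fst x) (snd x)"
    using assms(1,2) unfolding is_kernel_def is_policy_def is_distr_def by simp_all
  then show ?case unfolding sa_dist_Suc using Suc by (intro mult_nonneg_nonneg sum_nonneg) auto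
qed (simp add: assms(3))

lemma sum_sa_dist:
  assumes "is_kernel P" and "is_policy pol"
  shows "(\<Sum>x\<in>UNIV. sa_dist P pol d n x) = (\<Sum>x\<in>UNIV. d x)"
proof (induction n)
  case (Suc n)
  have "(\<Sum>x\<in>UNIV. sa_dist P pol d (Suc n) x)
      = (\<Sum>s\<in>UNIV. (\<Sum>y\<in>UNIV. sa_dist P pol d n y * P (fst y) (snd y) s) * (\<Sum>a\<in>UNIV. pol s a))"
    unfolding sa_dist_Suc sum_UNIV_pair[where f = "\<lambda>x. _ x * pol (fst x) (snd x)"]
    by (simp add: sum_distrib_left)
  also have "\<dots> = (\<Sum>y\<in>UNIV. sa_dist P pol d n y * (\<Sum>s\<in>UNIV. P (fst y) (snd y) s))"
    using assms(2) unfolding is_policy_def is_distr_def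
    by (simp add: sum_distrib_left) (rule sum.swap)
  also have "\<dots> = (\<Sum>y\<in>UNIV. sa_dist P pol d n y)"
    using assms(1) unfolding is_kernel_def is_distr_def by simp
  finally show ?case using Suc by simp
qed simp

lemma sa_dist_le_1:
  assumes "is_kernel P" and "is_policy pol" and "is_distr d"
  shows "sa_dist P pol d n x \<le> 1"
proof -
  have "\<And>y. 0 \<le> sa_dist P pol d n y"
    using sa_dist_nonneg[OF assms(1,2)] assms(3) unfolding is_distr_def by blast
  then have "sa_dist P pol d n x \<le> (\<Sum>y\<in>UNIV. sa_dist P pol d n y)" by (intro member_le_sum) auto
  also have "\<dots> = 1" using sum_sa_dist[OF assms(1,2)] assms(3) unfolding is_distr_def by simp
  finally show ?thesis .
qed

lemma sa_dist_linear: "sa_dist P pol d n x = (\<Sum>y\<in>UNIV. d y * sa_dist P pol (point_mass y) n x)"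
proof (induction n arbitrary: x)
  case 0
  have "(\<Sum>y\<in>UNIV. d y * point_mass y x) = (\<Sum>y\<in>UNIV. if y = x then d y else 0)"
    unfolding point_mass_def by (intro sum.cong) auto
  then show ?case by simp
next
  case (Suc n)
  have "(\<Sum>z\<in>UNIV. (\<Sum>y\<in>UNIV. d y * sa_dist P pol (point_mass y) n z) * P (fst z) (snd z) (fst x))
      = (\<Sum>y\<in>UNIV. d y * (\<Sum>z\<in>UNIV. sa_dist P pol (point_mass y) n z * P (fst z) (snd z) (fst x)))"
    by (simp add: sum_distrib_left sum_distrib_right mult.assoc) (rule sum.swap)
  then show ?case unfolding sa_dist_Suc Suc by (simp add: sum_distrib_right mult.assoc)
qed

definition occ_value :: "('x::finite \<Rightarrow> real) \<Rightarrow> real^'x \<Rightarrow> real" where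
  "occ_value u w = (\<Sum>x\<in>UNIV. w $ x * u x)"

lemma occ_value_affine:
  "occ_value u ((1 - s) *\<^sub>R y + s *\<^sub>R z) = (1 - s) * occ_value u y + s * occ_value u z"
proof -
  have "(\<Sum>x\<in>UNIV. ((1 - s) * y $ x + s * z $ x) * u x)
      = (1 - s) * (\<Sum>x\<in>UNIV. y $ x * u x) + s * (\<Sum>x\<in>UNIV. z $ x * u x)"
    by (simp add: sum.distrib sum_distrib_left distrib_right mult.assoc)
  then show ?thesis unfolding occ_value_def by simp
qed

lemma continuous_on_occ_value: "continuous_on S (occ_value u)"
  unfolding occ_value_def by (intro continuous_intros)

locale discounted_mdp =
  fixes P :: "'s::finite \<Rightarrow> 'a::finite \<Rightarrow> 's \<Rightarrow> real" and \<gamma> :: real and \<rho> :: "'s \<Rightarrow> real"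
  assumes kernel: "is_kernel P" and init: "is_distr \<rho>"
    and gamma_nonneg: "0 \<le> \<gamma>" and gamma_lt_1: "\<gamma> < 1"
begin

definition inflow :: "('s \<times> 'a \<Rightarrow> real) \<Rightarrow> 's \<Rightarrow> real" where
  "inflow d s = (\<Sum>x\<in>UNIV. d x * P (fst x) (snd x) s)"

definition start_distr :: "('s \<Rightarrow> 'a \<Rightarrow> real) \<Rightarrow> 's \<times> 'a \<Rightarrow> real" where
  "start_distr pol x = \<rho> (fst x) * pol (fst x) (snd x)"

definition occupancy :: "('s \<Rightarrow> 'a \<Rightarrow> real) \<Rightarrow> 's \<times> 'a \<Rightarrow> real" where
  "occupancy pol x = (\<Sum>\<tau>. \<gamma> ^ \<tau> * sa_dist P pol (start_distr pol) \<tau> x)"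

lemma kernel_nonneg: "0 \<le> P s a s'"
  using kernel unfolding is_kernel_def is_distr_def by simp

lemma sum_inflow: "(\<Sum>s\<in>UNIV. inflow d s) = (\<Sum>x\<in>UNIV. d x)"
  using kernel unfolding inflow_def is_kernel_def is_distr_def
  by (subst sum.swap) (simp add: sum_distrib_left[symmetric])

lemma inflow_diff: "inflow (\<lambda>x. d x - d' x) s = inflow d s - inflow d' s"
  unfolding inflow_def by (simp add: sum_subtractf left_diff_distrib)

lemma is_distr_start_distr:
  assumes "is_policy pol" shows "is_distr (start_distr pol)"
proof -
  have "(\<Sum>x\<in>UNIV. start_distr pol x) = (\<Sum>s\<in>UNIV. \<rho> s * (\<Sum>a\<in>UNIV. pol s a))"
    unfolding start_distr_def sum_UNIV_pair by (simp add: sum_distrib_left)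
  with assms init show ?thesis
    unfolding start_distr_def is_policy_def is_distr_def by simp
qed

lemma summable_discounted_sa_dist:
  assumes "is_policy pol" and "is_distr d"
  shows "summable (\<lambda>\<tau>. \<gamma> ^ \<tau> * sa_dist P pol d \<tau> x)"
proof (rule summable_comparison_test'[where N = 0])
  show "summable (\<lambda>\<tau>. \<gamma> ^ \<tau>)" using gamma_nonneg gamma_lt_1 by (intro summable_geometric) simp
  fix \<tau>
  have "0 \<le> sa_dist P pol d \<tau> x"
    using sa_dist_nonneg[OF kernel assms(1)] assms(2) unfolding is_distr_def by blast
  then show "norm (\<gamma> ^ \<tau> * sa_dist P pol d \<tau> x) \<le> \<gamma> ^ \<tau>"
    using sa_dist_le_1[OF kernel assms] gamma_nonneg by (simp add: abs_mult mult_left_le)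
qed

lemma summable_discounted_reward:
  assumes "is_policy pol" and "is_distr d"
  shows "summable (\<lambda>\<tau>. \<gamma> ^ \<tau> * (\<Sum>x\<in>UNIV. sa_dist P pol d \<tau> x * u x))"
  using summable_sum[of UNIV "\<lambda>x \<tau>. \<gamma> ^ \<tau> * sa_dist P pol d \<tau> x * u x"]
    summable_mult2[OF summable_discounted_sa_dist[OF assms]]
  by (simp add: sum_distrib_left mult.assoc)

lemma Vrho_eq_suminf:
  assumes "is_policy pol"
  shows "Vrho P \<gamma> \<rho> pol u
    = (\<Sum>\<tau>. \<gamma> ^ \<tau> * (\<Sum>x\<in>UNIV. sa_dist P pol (start_distr pol) \<tau> x * u x))"
proof -
  define f where "f y \<tau> = \<gamma> ^ \<tau> * (\<Sum>x\<in>UNIV. sa_dist P pol (point_mass y) \<tau> x * u x)" for y \<tau>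
  have f: "summable (f y)" for y
    unfolding f_def by (rule summable_discounted_reward[OF assms is_distr_point_mass])
  have "Vrho P \<gamma> \<rho> pol u = (\<Sum>y\<in>UNIV. start_distr pol y * suminf (f y))"
    unfolding Vrho_def Vfun_def Qfun_def f_def start_distr_def point_mass_def sum_UNIV_pair
    by (simp add: sum_distrib_left mult.assoc)
  also have "\<dots> = (\<Sum>\<tau>. \<Sum>y\<in>UNIV. start_distr pol y * f y \<tau>)"
    using f by (simp add: suminf_mult suminf_sum summable_mult)
  also have "(\<lambda>\<tau>. \<Sum>y\<in>UNIV. start_distr pol y * f y \<tau>)
      = (\<lambda>\<tau>. \<gamma> ^ \<tau> * (\<Sum>x\<in>UNIV. sa_dist P pol (start_distr pol) \<tau> x * u x))"
  proof
    fix \<tau>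
    have "(\<Sum>y\<in>UNIV. start_distr pol y * f y \<tau>)
        = \<gamma> ^ \<tau> * (\<Sum>y\<in>UNIV. \<Sum>x\<in>UNIV. start_distr pol y * sa_dist P pol (point_mass y) \<tau> x * u x)"
      unfolding f_def by (simp add: sum_distrib_left mult_ac)
    also have "\<dots> = \<gamma> ^ \<tau> * (\<Sum>x\<in>UNIV. sa_dist P pol (start_distr pol) \<tau> x * u x)"
      by (subst sum.swap) (simp add: sa_dist_linear[of P pol "start_distr pol"] sum_distrib_right)
    finally show "(\<Sum>y\<in>UNIV. start_distr pol y * f y \<tau>)
        = \<gamma> ^ \<tau> * (\<Sum>x\<in>UNIV. sa_dist P pol (start_distr pol) \<tau> x * u x)" .
  qed
  finally show ?thesis .
qed

lemma Vrho_eq_occupancy: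
  assumes "is_policy pol"
  shows "Vrho P \<gamma> \<rho> pol u = (\<Sum>x\<in>UNIV. occupancy pol x * u x)"
proof -
  note summable = summable_discounted_sa_dist[OF assms is_distr_start_distr[OF assms]]
  have "(\<Sum>x\<in>UNIV. occupancy pol x * u x)
      = (\<Sum>\<tau>. \<Sum>x\<in>UNIV. \<gamma> ^ \<tau> * sa_dist P pol (start_distr pol) \<tau> x * u x)"
    unfolding occupancy_def using summable
    by (simp add: suminf_mult2 suminf_sum summable_mult2)
  then show ?thesis unfolding Vrho_eq_suminf[OF assms] by (simp add: sum_distrib_left mult.assoc)
qed

lemma occupancy_nonneg:
  assumes "is_policy pol" shows "0 \<le> occupancy pol x"
proof -
  have "0 \<le> sa_dist P pol (start_distr pol) \<tau> x" for \<tau>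
    using sa_dist_nonneg[OF kernel assms] is_distr_start_distr[OF assms] unfolding is_distr_def by blast
  then show ?thesis
    unfolding occupancy_def using summable_discounted_sa_dist[OF assms is_distr_start_distr[OF assms]]
    by (intro suminf_nonneg) (simp_all add: gamma_nonneg)
qed

lemma occupancy_flow:
  assumes "is_policy pol"
  shows "occupancy pol (s, a) = pol s a * (\<rho> s + \<gamma> * inflow (occupancy pol) s)"
proof -
  let ?D = "sa_dist P pol (start_distr pol)"
  note summable = summable_discounted_sa_dist[OF assms is_distr_start_distr[OF assms]]
  define f where "f \<tau> = \<gamma> ^ \<tau> * ?D \<tau> (s, a)" for \<tau>
  define g where "g \<tau> = (\<Sum>x\<in>UNIV. \<gamma> ^ \<tau> * ?D \<tau> x * P (fst x) (snd x) s)" for \<tau>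
  have "summable f" unfolding f_def by (rule summable)
  have "occupancy pol (s, a) = suminf f" unfolding occupancy_def f_def ..
  also have "\<dots> = f 0 + (\<Sum>\<tau>. f (Suc \<tau>))" using suminf_split_head[OF \<open>summable f\<close>] by simp
  finally have "occupancy pol (s, a) = f 0 + (\<Sum>\<tau>. f (Suc \<tau>))" .
  moreover have "f 0 = \<rho> s * pol s a" unfolding f_def start_distr_def by simp
  moreover have "(\<Sum>\<tau>. f (Suc \<tau>)) = \<gamma> * pol s a * inflow (occupancy pol) s"
  proof -
    have "f (Suc \<tau>) = \<gamma> * pol s a * g \<tau>" for \<tau>
      unfolding f_def g_def by (simp add: sum_distrib_left sum_distrib_right mult_ac)
    moreover have "summable g" unfolding g_def using summable by (intro summable_sum summable_mult2)
    moreover have "(\<Sum>\<tau>. g \<tau>) = inflow (occupancy pol) s"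
      unfolding g_def inflow_def occupancy_def using summable
      by (simp add: suminf_sum summable_mult2 suminf_mult2)
    ultimately show ?thesis using suminf_mult[of g "\<gamma> * pol s a"] by simp
  qed
  ultimately show ?thesis by (simp add: algebra_simps)
qed

lemma sum_occupancy:
  assumes "is_policy pol"
  shows "(\<Sum>a\<in>UNIV. occupancy pol (s, a)) = \<rho> s + \<gamma> * inflow (occupancy pol) s"
  using assms unfolding occupancy_flow[OF assms] is_policy_def is_distr_def
  by (simp add: sum_distrib_right[symmetric])

text \<open>Discounting makes the homogeneous flow equation contracting, so its only solution is zero.\<close>

lemma flow_contraction_zero:
  assumes "\<And>s. (\<Sum>a\<in>UNIV. \<bar>e (s, a)\<bar>) \<le> \<gamma> * inflow (\<lambda>x. \<bar>e x\<bar>) s"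
  shows "e x = 0"
proof -
  have "(\<Sum>x\<in>UNIV. \<bar>e x\<bar>) = (\<Sum>s\<in>UNIV. \<Sum>a\<in>UNIV. \<bar>e (s, a)\<bar>)" by (rule sum_UNIV_pair)
  also have "\<dots> \<le> (\<Sum>s\<in>UNIV. \<gamma> * inflow (\<lambda>x. \<bar>e x\<bar>) s)" using assms by (rule sum_mono)
  also have "\<dots> = \<gamma> * (\<Sum>x\<in>UNIV. \<bar>e x\<bar>)" by (simp add: sum_distrib_left[symmetric] sum_inflow)
  finally have "(\<Sum>x\<in>UNIV. \<bar>e x\<bar>) \<le> \<gamma> * (\<Sum>x\<in>UNIV. \<bar>e x\<bar>)" .
  then have "(1 - \<gamma>) * (\<Sum>x\<in>UNIV. \<bar>e x\<bar>) \<le> 0" by (simp add: algebra_simps)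
  then have "(\<Sum>x\<in>UNIV. \<bar>e x\<bar>) \<le> 0" using gamma_lt_1 by (simp add: mult_le_0_iff)
  moreover have "0 \<le> (\<Sum>x\<in>UNIV. \<bar>e x\<bar>)" by (simp add: sum_nonneg)
  ultimately have "(\<Sum>x\<in>UNIV. \<bar>e x\<bar>) = 0" by linarith
  then show ?thesis by (cases x) (simp add: sum_nonneg_eq_0_iff)
qed

definition flow_policy :: "('s \<times> 'a \<Rightarrow> real) \<Rightarrow> 's \<Rightarrow> 'a \<Rightarrow> real" where
  "flow_policy d s a =
    (if 0 < (\<Sum>b\<in>UNIV. d (s, b)) then d (s, a) / (\<Sum>b\<in>UNIV. d (s, b)) else 1 / real CARD('a))"

lemma is_policy_flow_policy:
  assumes "\<And>x. 0 \<le> d x" shows "is_policy (flow_policy d)"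
  unfolding is_policy_def is_distr_def
proof (intro allI conjI)
  fix s a show "0 \<le> flow_policy d s a" unfolding flow_policy_def using assms by simp
next
  fix s show "(\<Sum>a\<in>UNIV. flow_policy d s a) = 1"
    unfolding flow_policy_def
    by (cases "0 < (\<Sum>b\<in>UNIV. d (s, b))") (simp_all add: sum_divide_distrib[symmetric])
qed

lemma flow_policy_mult:
  assumes "\<And>x. 0 \<le> d x" shows "d (s, a) = flow_policy d s a * (\<Sum>b\<in>UNIV. d (s, b))"
proof (cases "0 < (\<Sum>b\<in>UNIV. d (s, b))")
  case False
  then have "(\<Sum>b\<in>UNIV. d (s, b)) = 0" using sum_nonneg[of UNIV "\<lambda>b. d (s, b)"] assms by simp
  then show ?thesis using assms by (simp add: sum_nonneg_eq_0_iff)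
qed (simp add: flow_policy_def)

text \<open>The difference between the occupancy measure of \<open>flow_policy d\<close> and \<open>d\<close> solves the
  homogeneous flow equation.\<close>

lemma occupancy_flow_policy:
  assumes nonneg: "\<And>x. 0 \<le> d x" and flow: "\<And>s. (\<Sum>a\<in>UNIV. d (s, a)) = \<rho> s + \<gamma> * inflow d s"
  shows "occupancy (flow_policy d) x = d x"
proof -
  let ?pol = "flow_policy d"
  have pol: "is_policy ?pol" by (rule is_policy_flow_policy[OF nonneg])
  define e where "e x = occupancy ?pol x - d x" for x
  have "\<bar>e (s, a)\<bar> = \<gamma> * ?pol s a * \<bar>inflow e s\<bar>" for s a
  proof -
    have "e (s, a) = \<gamma> * ?pol s a * inflow e s"
      unfolding e_def inflow_diff occupancy_flow[OF pol]
      by (subst flow_policy_mult[OF nonneg]) (simp add: flow algebra_simps)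
    then show ?thesis
      using pol gamma_nonneg unfolding is_policy_def is_distr_def by (simp add: abs_mult)
  qed
  moreover have "\<bar>inflow e s\<bar> \<le> inflow (\<lambda>x. \<bar>e x\<bar>) s" for s
  proof -
    have "\<bar>inflow e s\<bar> \<le> (\<Sum>x\<in>UNIV. \<bar>e x * P (fst x) (snd x) s\<bar>)" unfolding inflow_def by (rule sum_abs)
    also have "\<dots> = inflow (\<lambda>x. \<bar>e x\<bar>) s" unfolding inflow_def by (simp add: abs_mult kernel_nonneg)
    finally show ?thesis .
  qed
  ultimately have "(\<Sum>a\<in>UNIV. \<bar>e (s, a)\<bar>) \<le> (\<Sum>a\<in>UNIV. \<gamma> * ?pol s a * inflow (\<lambda>x. \<bar>e x\<bar>) s)" for s
    using pol gamma_nonneg unfolding is_policy_def is_distr_def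
    by (intro sum_mono) (simp add: mult_left_mono)
  also have "(\<Sum>a\<in>UNIV. \<gamma> * ?pol s a * inflow (\<lambda>x. \<bar>e x\<bar>) s) = \<gamma> * inflow (\<lambda>x. \<bar>e x\<bar>) s" for s
    using pol unfolding is_policy_def is_distr_def
      by (simp add: sum_distrib_right[symmetric] sum_distrib_left[symmetric])
  finally have "e x = 0" by (rule flow_contraction_zero)
  then show ?thesis unfolding e_def by simp
qed

definition occupancy_polytope :: "(real ^ ('s \<times> 'a)) set" where
  "occupancy_polytope = {w. (\<forall>x. 0 \<le> w $ x) \<and>
      (\<forall>s. (\<Sum>a\<in>UNIV. w $ (s, a)) = \<rho> s + \<gamma> * inflow (vec_nth w) s)}"

definition occ_vec :: "('s \<Rightarrow> 'a \<Rightarrow> real) \<Rightarrow> real ^ ('s \<times> 'a)" where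
  "occ_vec pol = (\<chi> x. occupancy pol x)"

lemma occ_vec_in_polytope: "is_policy pol \<Longrightarrow> occ_vec pol \<in> occupancy_polytope"
  unfolding occupancy_polytope_def occ_vec_def
  using occupancy_nonneg sum_occupancy by (simp add: vec_lambda_inverse)

lemma Vrho_eq_occ_value: "is_policy pol \<Longrightarrow> Vrho P \<gamma> \<rho> pol u = occ_value u (occ_vec pol)"
  unfolding occ_value_def occ_vec_def by (simp add: Vrho_eq_occupancy)

lemma polytope_eq_occ_vec:
  assumes "w \<in> occupancy_polytope" obtains pol where "is_policy pol" and "occ_vec pol = w"
proof
  have nonneg: "\<forall>x. 0 \<le> w $ x" and flow: "\<forall>s. (\<Sum>a\<in>UNIV. w $ (s, a)) = \<rho> s + \<gamma> * inflow (vec_nth w) s"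
    using assms unfolding occupancy_polytope_def by blast+
  show "is_policy (flow_policy (vec_nth w))" using nonneg by (intro is_policy_flow_policy) blast
  have "occupancy (flow_policy (vec_nth w)) x = w $ x" for x
    using nonneg flow by (intro occupancy_flow_policy) blast+
  then show "occ_vec (flow_policy (vec_nth w)) = w" unfolding occ_vec_def by (simp add: vec_eq_iff)
qed

lemma inflow_vec_comb:
  "inflow (vec_nth (u *\<^sub>R y + v *\<^sub>R z)) s = u * inflow (vec_nth y) s + v * inflow (vec_nth z) s"
  unfolding inflow_def by (simp add: sum.distrib sum_distrib_left algebra_simps)

lemma convex_occupancy_polytope: "convex occupancy_polytope"
proof (rule convexI)
  fix y z :: "real ^ ('s \<times> 'a)" and u v :: real
  assume y: "y \<in> occupancy_polytope" and z: "z \<in> occupancy_polytope"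
    and uv: "0 \<le> u" "0 \<le> v" "u + v = 1"
  have "(\<Sum>a\<in>UNIV. (u *\<^sub>R y + v *\<^sub>R z) $ (s, a))
      = \<rho> s + \<gamma> * inflow (vec_nth (u *\<^sub>R y + v *\<^sub>R z)) s" for s
  proof -
    have "(\<Sum>a\<in>UNIV. (u *\<^sub>R y + v *\<^sub>R z) $ (s, a))
        = u * (\<Sum>a\<in>UNIV. y $ (s, a)) + v * (\<Sum>a\<in>UNIV. z $ (s, a))"
      by (simp add: sum.distrib sum_distrib_left)
    also have "\<dots> = (u + v) * \<rho> s + \<gamma> * (u * inflow (vec_nth y) s + v * inflow (vec_nth z) s)"
      using y z unfolding occupancy_polytope_def by (simp add: algebra_simps)
    finally show ?thesis using uv(3) by (simp add: inflow_vec_comb)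
  qed
  then show "u *\<^sub>R y + v *\<^sub>R z \<in> occupancy_polytope"
    using y z uv unfolding occupancy_polytope_def by simp
qed

lemma sum_polytope: "w \<in> occupancy_polytope \<Longrightarrow> (\<Sum>x\<in>UNIV. w $ x) = 1 / (1 - \<gamma>)"
proof -
  assume "w \<in> occupancy_polytope"
  then have "(\<Sum>x\<in>UNIV. w $ x) = (\<Sum>s\<in>UNIV. \<rho> s + \<gamma> * inflow (vec_nth w) s)"
    unfolding occupancy_polytope_def sum_UNIV_pair by simp
  also have "\<dots> = 1 + \<gamma> * (\<Sum>x\<in>UNIV. w $ x)"
    using init unfolding is_distr_def by (simp add: sum.distrib sum_distrib_left[symmetric] sum_inflow)
  finally show ?thesis using gamma_lt_1 by (simp add: field_simps)
qed

lemma compact_occupancy_polytope: "compact occupancy_polytope"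
  unfolding compact_eq_bounded_closed
proof
  have "occupancy_polytope \<subseteq> cbox 0 (\<chi> x. 1 / (1 - \<gamma>))"
  proof
    fix w assume w: "w \<in> occupancy_polytope"
    then have "\<forall>x. 0 \<le> w $ x" unfolding occupancy_polytope_def by blast
    moreover have "w $ x \<le> (\<Sum>x\<in>UNIV. w $ x)" for x using \<open>\<forall>x. 0 \<le> w $ x\<close> by (intro member_le_sum) auto
    ultimately show "w \<in> cbox 0 (\<chi> x. 1 / (1 - \<gamma>))"
      using sum_polytope[OF w] unfolding mem_box_cart by simp
  qed
  then show "bounded occupancy_polytope" using bounded_cbox bounded_subset by blast
next
  have "closed {w :: real ^ ('s \<times> 'a). \<forall>x. 0 \<le> w $ x}"
    by (intro closed_Collect_all closed_Collect_le continuous_intros)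
  moreover have "closed {w :: real ^ ('s \<times> 'a).
      \<forall>s. (\<Sum>a\<in>UNIV. w $ (s, a)) = \<rho> s + \<gamma> * inflow (vec_nth w) s}"
    unfolding inflow_def by (intro closed_Collect_all closed_Collect_eq continuous_intros)
  ultimately show "closed occupancy_polytope"
    unfolding occupancy_polytope_def by (simp add: Collect_conj_eq closed_Int)
qed

end

section \<open>Lagrange multipliers from Farkas' lemma\<close>

lemma convex_cone_hull_finite_family:
  fixes g :: "'i \<Rightarrow> 'v::real_vector"
  assumes "finite I" and "y \<in> convex_cone hull (g ` I)"
  obtains c where "\<And>i. i \<in> I \<Longrightarrow> 0 \<le> c i" and "y = (\<Sum>i\<in>I. c i *\<^sub>R g i)"
proof -
  define cone where "cone = {y. \<exists>c. (\<forall>i\<in>I. 0 \<le> c i) \<and> y = (\<Sum>i\<in>I. c i *\<^sub>R g i)}"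
  have "convex_cone cone"
    unfolding convex_cone_iff
  proof (intro conjI ballI allI impI)
    show "0 \<in> cone" unfolding cone_def by (intro CollectI exI[of _ "\<lambda>_. 0"]) simp
  next
    fix x y assume "x \<in> cone" "y \<in> cone"
    then obtain c c' where "\<forall>i\<in>I. 0 \<le> c i" "x = (\<Sum>i\<in>I. c i *\<^sub>R g i)"
      and "\<forall>i\<in>I. 0 \<le> c' i" "y = (\<Sum>i\<in>I. c' i *\<^sub>R g i)" unfolding cone_def by blast
    then show "x + y \<in> cone" unfolding cone_def
      by (intro CollectI exI[of _ "\<lambda>i. c i + c' i"]) (simp add: scaleR_add_left sum.distrib)
  next
    fix x and t :: real assume "x \<in> cone" "0 \<le> t"
    then obtain c where "\<forall>i\<in>I. 0 \<le> c i" "x = (\<Sum>i\<in>I. c i *\<^sub>R g i)" unfolding cone_def by blast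
    then show "t *\<^sub>R x \<in> cone" unfolding cone_def using \<open>0 \<le> t\<close>
      by (intro CollectI exI[of _ "\<lambda>i. t * c i"]) (simp add: scaleR_sum_right)
  qed
  moreover have "g ` I \<subseteq> cone"
  proof
    fix y assume "y \<in> g ` I"
    then obtain j where "j \<in> I" "y = g j" by blast
    have "(\<Sum>i\<in>I. (if i = j then 1 else 0) *\<^sub>R g i) = (\<Sum>i\<in>I. if i = j then g i else 0)"
      by (intro sum.cong) auto
    then have "y = (\<Sum>i\<in>I. (if i = j then 1 else 0) *\<^sub>R g i)"
      using \<open>j \<in> I\<close> \<open>y = g j\<close> assms(1) by simp
    then show "y \<in> cone" unfolding cone_def
      by (intro CollectI exI[of _ "\<lambda>i. if i = j then 1 else 0"]) simp
  qed
  ultimately have "convex_cone hull (g ` I) \<subseteq> cone" by (rule hull_minimal[rotated])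
  then show ?thesis using assms(2) that unfolding cone_def by blast
qed

lemma farkas_finite:
  fixes g :: "'i \<Rightarrow> 'v::euclidean_space"
  assumes "finite I" and "\<And>a. (\<And>i. i \<in> I \<Longrightarrow> 0 \<le> inner a (g i)) \<Longrightarrow> 0 \<le> inner a q"
  obtains c where "\<And>i. i \<in> I \<Longrightarrow> 0 \<le> c i" and "q = (\<Sum>i\<in>I. c i *\<^sub>R g i)"
proof -
  let ?H = "convex_cone hull (g ` I)"
  have "q \<in> ?H"
  proof (rule ccontr)
    assume "q \<notin> ?H"
    then obtain a d where sep: "inner a q < d" "\<And>x. x \<in> ?H \<Longrightarrow> d < inner a x"
      using separating_hyperplane_closed_point[OF convex_convex_cone_hull
          closed_convex_cone_hull[OF finite_imageI[OF assms(1)]]] by blast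
    have "d < 0" using sep(2)[OF convex_cone_hull_contains_0] by simp
    have "0 \<le> inner a (g i)" if "i \<in> I" for i
    proof (rule ccontr)
      assume "\<not> 0 \<le> inner a (g i)"
      then have "g i \<in> ?H" "0 \<le> d / inner a (g i)"
        using that \<open>d < 0\<close> by (auto intro: hull_inc simp: divide_nonpos_neg)
      then have "d < inner a ((d / inner a (g i)) *\<^sub>R g i)" by (intro sep(2) convex_cone_hull_mul)
      then show False using \<open>\<not> 0 \<le> inner a (g i)\<close> by simp
    qed
    then have "0 \<le> inner a q" by (rule assms(2))
    then show False using sep(1) \<open>d < 0\<close> by simp
  qed
  then show ?thesis using convex_cone_hull_finite_family[OF assms(1)] that by blast
qed

datatype ('s, 'a) lp_index = Constr nat | Flow 's | Flow_neg 's | Coord "'s \<times> 'a" | Slack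

context discounted_mdp
begin

definition flow_vec :: "'s \<Rightarrow> real ^ ('s \<times> 'a)" where
  "flow_vec s = (\<chi> x. (if fst x = s then 1 else 0) - \<gamma> * P (fst x) (snd x) s)"

lemma inner_flow_vec: "inner w (flow_vec s) = (\<Sum>a\<in>UNIV. w $ (s, a)) - \<gamma> * inflow (vec_nth w) s"
proof -
  have "inner w (flow_vec s)
      = (\<Sum>x\<in>UNIV. w $ x * (if fst x = s then 1 else 0)) - \<gamma> * inflow (vec_nth w) s"
    unfolding inner_vec_def flow_vec_def inflow_def
    by (simp add: algebra_simps sum_subtractf sum_distrib_left)
  also have "(\<Sum>x\<in>UNIV. w $ x * (if fst x = s then 1 else 0))
      = (\<Sum>s'\<in>UNIV. if s' = s then (\<Sum>a\<in>UNIV. w $ (s', a)) else 0)"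
    unfolding sum_UNIV_pair by (intro sum.cong) auto
  finally show ?thesis by simp
qed

lemma inflow_scaleR: "inflow (vec_nth (t *\<^sub>R w)) s = t * inflow (vec_nth w) s"
  unfolding inflow_def by (simp add: sum_distrib_left mult.assoc)

text \<open>Homogenised form of the CMDP linear program: for \<open>\<tau> > 0\<close> the vector \<open>w / \<tau>\<close> is a feasible
  occupancy measure, and for \<open>\<tau> = 0\<close> the flow equation forces \<open>w = 0\<close>.\<close>

lemma homogenized_value_le:
  fixes c :: "nat \<Rightarrow> 's \<times> 'a \<Rightarrow> real" and b :: "nat \<Rightarrow> real" and m :: nat
  assumes opt: "\<forall>w\<in>occupancy_polytope. (\<forall>i<m. b i \<le> occ_value (c i) w) \<longrightarrow> occ_value r w \<le> V"
    and nonneg: "\<And>x. 0 \<le> w $ x" and "0 \<le> \<tau>"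
    and flow: "\<And>s. (\<Sum>a\<in>UNIV. w $ (s, a)) = \<tau> * \<rho> s + \<gamma> * inflow (vec_nth w) s"
    and constr: "\<And>i. i < m \<Longrightarrow> \<tau> * b i \<le> occ_value (c i) w"
  shows "occ_value r w \<le> \<tau> * V"
proof (cases "\<tau> = 0")
  case True
  have abs: "\<bar>w $ x\<bar> = w $ x" for x using nonneg[of x] by simp
  have "w $ x = 0" for x
  proof (rule flow_contraction_zero[where e = "vec_nth w"])
    fix s show "(\<Sum>a\<in>UNIV. \<bar>w $ (s, a)\<bar>) \<le> \<gamma> * inflow (\<lambda>x. \<bar>w $ x\<bar>) s"
      unfolding abs using flow[of s] True by simp
  qed
  then show ?thesis using True by (simp add: occ_value_def)
next
  case False
  then have "0 < \<tau>" using \<open>0 \<le> \<tau>\<close> by simp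
  have scale: "occ_value u ((1 / \<tau>) *\<^sub>R w) = occ_value u w / \<tau>" for u
    unfolding occ_value_def by (simp add: sum_divide_distrib)
  have "(\<Sum>a\<in>UNIV. ((1 / \<tau>) *\<^sub>R w) $ (s, a)) = \<rho> s + \<gamma> * inflow (vec_nth ((1 / \<tau>) *\<^sub>R w)) s" for s
  proof -
    have "(\<Sum>a\<in>UNIV. ((1 / \<tau>) *\<^sub>R w) $ (s, a)) = (1 / \<tau>) * (\<tau> * \<rho> s + \<gamma> * inflow (vec_nth w) s)"
      unfolding flow[symmetric] by (simp add: sum_distrib_left)
    also have "\<dots> = \<rho> s + \<gamma> * inflow (vec_nth ((1 / \<tau>) *\<^sub>R w)) s"
      unfolding inflow_scaleR using \<open>0 < \<tau>\<close> by (simp add: field_simps)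
    finally show ?thesis .
  qed
  moreover have "\<forall>x. 0 \<le> ((1 / \<tau>) *\<^sub>R w) $ x" using nonneg \<open>0 < \<tau>\<close> by simp
  ultimately have mem: "(1 / \<tau>) *\<^sub>R w \<in> occupancy_polytope" unfolding occupancy_polytope_def by blast
  have "b i \<le> occ_value (c i) ((1 / \<tau>) *\<^sub>R w)" if "i < m" for i
    using constr[OF that] \<open>0 < \<tau>\<close> unfolding scale by (simp add: pos_le_divide_eq mult.commute)
  then have "occ_value r ((1 / \<tau>) *\<^sub>R w) \<le> V" using opt mem by blast
  then show ?thesis using \<open>0 < \<tau>\<close> unfolding scale by (simp add: pos_divide_le_eq mult.commute)
qed

definition lp_gen :: "(nat \<Rightarrow> 's \<times> 'a \<Rightarrow> real) \<Rightarrow> (nat \<Rightarrow> real) \<Rightarrow> ('s, 'a) lp_index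
    \<Rightarrow> (real ^ ('s \<times> 'a)) \<times> real" where
  "lp_gen c b j = (case j of
      Constr i \<Rightarrow> ((\<chi> x. c i x), b i)
    | Flow s \<Rightarrow> (flow_vec s, \<rho> s)
    | Flow_neg s \<Rightarrow> - (flow_vec s, \<rho> s)
    | Coord x \<Rightarrow> (axis x 1, 0)
    | Slack \<Rightarrow> (0, - 1))"

definition lp_indices :: "nat \<Rightarrow> ('s, 'a) lp_index set" where
  "lp_indices m = Constr ` {..<m} \<union> range Flow \<union> range Flow_neg \<union> range Coord \<union> {Slack}"

lemma finite_lp_indices: "finite (lp_indices m)"
  unfolding lp_indices_def by simp

lemma Constr_in_lp_indices: "Constr i \<in> lp_indices m \<longleftrightarrow> i < m"
  unfolding lp_indices_def by auto

lemma inner_lp_gen_Constr: "inner (w, t) (lp_gen c b (Constr i)) = occ_value (c i) w + t * b i"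
  unfolding lp_gen_def occ_value_def by (simp add: inner_vec_def)

lemma lp_farkas_premise:
  fixes c :: "nat \<Rightarrow> 's \<times> 'a \<Rightarrow> real" and b :: "nat \<Rightarrow> real" and m :: nat
  assumes opt: "\<forall>w\<in>occupancy_polytope. (\<forall>i<m. b i \<le> occ_value (c i) w) \<longrightarrow> occ_value r w \<le> V"
    and gen: "\<And>j. j \<in> lp_indices m \<Longrightarrow> 0 \<le> inner a (lp_gen c b j)"
  shows "0 \<le> inner a ((\<chi> x. - r x), - V)"
proof -
  obtain w t where a: "a = (w, t)" by (cases a)
  have nonneg: "0 \<le> w $ x" for x
    using gen[of "Coord x"] unfolding a lp_gen_def lp_indices_def by (simp add: inner_axis)
  have "0 \<le> - t" using gen[of Slack] unfolding a lp_gen_def lp_indices_def by simp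
  have flow: "(\<Sum>a\<in>UNIV. w $ (s, a)) = - t * \<rho> s + \<gamma> * inflow (vec_nth w) s" for s
    using gen[of "Flow s"] gen[of "Flow_neg s"] unfolding a lp_gen_def lp_indices_def
    by (simp add: inner_flow_vec)
  have constr: "- t * b i \<le> occ_value (c i) w" if "i < m" for i
    using gen[of "Constr i"] that inner_lp_gen_Constr[of w t c b i] unfolding a lp_indices_def by simp
  have "occ_value r w \<le> - t * V"
    by (rule homogenized_value_le[OF opt nonneg \<open>0 \<le> - t\<close> flow constr])
  then show ?thesis unfolding a occ_value_def by (simp add: inner_vec_def sum_negf)
qed

lemma inner_lp_gen_nonneg:
  assumes "w \<in> occupancy_polytope" and "j \<notin> range Constr"
  shows "0 \<le> inner (w, - 1 :: real) (lp_gen c b j)"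
proof -
  have nonneg: "\<forall>x. 0 \<le> w $ x" and flow: "\<forall>s. (\<Sum>a\<in>UNIV. w $ (s, a)) = \<rho> s + \<gamma> * inflow (vec_nth w) s"
    using assms(1) unfolding occupancy_polytope_def by blast+
  show ?thesis
  proof (cases j)
    case (Constr i) then show ?thesis using assms(2) by simp
  next
    case (Flow s) then show ?thesis using flow by (simp add: lp_gen_def inner_flow_vec)
  next
    case (Flow_neg s) then show ?thesis using flow by (simp add: lp_gen_def inner_flow_vec)
  next
    case (Coord x) then show ?thesis using nonneg by (cases x) (simp add: lp_gen_def inner_axis)
  next
    case Slack then show ?thesis by (simp add: lp_gen_def)
  qed
qed

lemma lagrange_multipliers:
  fixes c :: "nat \<Rightarrow> 's \<times> 'a \<Rightarrow> real" and b :: "nat \<Rightarrow> real" and m :: nat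
  assumes opt: "\<forall>w\<in>occupancy_polytope. (\<forall>i<m. b i \<le> occ_value (c i) w) \<longrightarrow> occ_value r w \<le> V"
  shows "\<exists>mult. (\<forall>i<m. 0 \<le> mult i) \<and> (\<forall>w\<in>occupancy_polytope.
    occ_value r w + (\<Sum>i<m. mult i * (occ_value (c i) w - b i)) \<le> V)"
proof -
  obtain coef where coef: "\<And>j. j \<in> lp_indices m \<Longrightarrow> 0 \<le> coef j"
    and q: "((\<chi> x. - r x), - V) = (\<Sum>j\<in>lp_indices m. coef j *\<^sub>R lp_gen c b j)"
    using farkas_finite[OF finite_lp_indices lp_farkas_premise[OF opt]] by blast
  have "occ_value r w + (\<Sum>i<m. coef (Constr i) * (occ_value (c i) w - b i)) \<le> V"
    if w: "w \<in> occupancy_polytope" for w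
  proof -
    let ?\<phi> = "\<lambda>j. coef j * inner (w, - 1 :: real) (lp_gen c b j)"
    let ?J = "Constr ` {..<m}"
    have "V - occ_value r w = inner (w, - 1 :: real) ((\<chi> x. - r x), - V)"
      unfolding occ_value_def by (simp add: inner_vec_def sum_negf)
    also have "\<dots> = (\<Sum>j\<in>lp_indices m. ?\<phi> j)"
      unfolding q by (simp only: inner_sum_right inner_scaleR_right)
    also have "\<dots> = (\<Sum>j\<in>lp_indices m - ?J. ?\<phi> j) + (\<Sum>j\<in>?J. ?\<phi> j)"
      by (rule sum.subset_diff) (auto simp: lp_indices_def)
    also have "(\<Sum>j\<in>?J. ?\<phi> j) = (\<Sum>i<m. coef (Constr i) * (occ_value (c i) w - b i))"
      by (subst sum.reindex) (simp_all add: inj_on_def inner_lp_gen_Constr)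
    finally have eq: "V - occ_value r w
        = (\<Sum>j\<in>lp_indices m - ?J. ?\<phi> j) + (\<Sum>i<m. coef (Constr i) * (occ_value (c i) w - b i))" .
    have "0 \<le> (\<Sum>j\<in>lp_indices m - ?J. ?\<phi> j)"
    proof (rule sum_nonneg)
      fix j assume "j \<in> lp_indices m - ?J"
      then have "j \<in> lp_indices m" and "j \<notin> range Constr" by (auto simp: Constr_in_lp_indices)
      then show "0 \<le> ?\<phi> j" by (intro mult_nonneg_nonneg coef inner_lp_gen_nonneg[OF w])
    qed
    then show ?thesis using eq by linarith
  qed
  moreover have "\<forall>i<m. 0 \<le> coef (Constr i)" using coef by (simp add: Constr_in_lp_indices)
  ultimately show ?thesis by (intro exI[of _ "\<lambda>i. coef (Constr i)"]) blast
qed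

end

section \<open>Constrained MDPs\<close>

locale cmdp = discounted_mdp P \<gamma> \<rho>
  for P :: "'s::finite \<Rightarrow> 'a::finite \<Rightarrow> 's \<Rightarrow> real" and \<gamma> \<rho> +
  fixes r :: "'s \<times> 'a \<Rightarrow> real" and c :: "nat \<Rightarrow> 's \<times> 'a \<Rightarrow> real" and b :: "nat \<Rightarrow> real"
    and m :: nat and \<beta> :: real
  assumes feasible: "\<exists>pol. feasible_policy P \<gamma> \<rho> c b m pol"
    and penalty_param_pos: "0 < \<beta>"
begin

definition constr_value :: "nat \<Rightarrow> real ^ ('s \<times> 'a) \<Rightarrow> real" where
  "constr_value i w = occ_value (c i) w - b i"

definition feasible_occ :: "(real ^ ('s \<times> 'a)) set" where
  "feasible_occ = {w \<in> occupancy_polytope. \<forall>i<m. 0 \<le> constr_value i w}"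

definition opt_occ :: "real ^ ('s \<times> 'a)" where
  "opt_occ = (SOME y. y \<in> feasible_occ \<and> (\<forall>w\<in>feasible_occ. occ_value r w \<le> occ_value r y))"

definition lagrange_mult :: "nat \<Rightarrow> real" where
  "lagrange_mult = (SOME \<nu>. (\<forall>i<m. 0 \<le> \<nu> i) \<and> (\<forall>w\<in>occupancy_polytope.
      occ_value r w + (\<Sum>i<m. \<nu> i * constr_value i w) \<le> occ_value r opt_occ))"

lemma occ_vec_feasible: "feasible_policy P \<gamma> \<rho> c b m pol \<Longrightarrow> occ_vec pol \<in> feasible_occ"
  unfolding feasible_policy_def feasible_occ_def constr_value_def
  by (simp add: occ_vec_in_polytope Vrho_eq_occ_value[symmetric])

lemma opt_occ: "opt_occ \<in> feasible_occ" "w \<in> feasible_occ \<Longrightarrow> occ_value r w \<le> occ_value r opt_occ"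
proof -
  have "closed {w. \<forall>i<m. 0 \<le> constr_value i w}"
    unfolding constr_value_def
    by (intro closed_Collect_all closed_Collect_imp closed_Collect_le continuous_on_occ_value
        continuous_intros) auto
  moreover have "feasible_occ = occupancy_polytope \<inter> {w. \<forall>i<m. 0 \<le> constr_value i w}"
    unfolding feasible_occ_def by auto
  ultimately have "compact feasible_occ" using compact_occupancy_polytope
    by (simp add: compact_Int_closed)
  moreover have "feasible_occ \<noteq> {}" using feasible occ_vec_feasible by blast
  ultimately have "\<exists>y. y \<in> feasible_occ \<and> (\<forall>w\<in>feasible_occ. occ_value r w \<le> occ_value r y)"
    using continuous_attains_sup[OF _ _ continuous_on_occ_value] by blast
  then have "opt_occ \<in> feasible_occ \<and> (\<forall>w\<in>feasible_occ. occ_value r w \<le> occ_value r opt_occ)"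
    unfolding opt_occ_def by (rule someI_ex)
  then show "opt_occ \<in> feasible_occ" "w \<in> feasible_occ \<Longrightarrow> occ_value r w \<le> occ_value r opt_occ"
    by auto
qed

lemma opt_value_le: "opt_value P \<gamma> \<rho> r c b m \<le> occ_value r opt_occ"
  unfolding opt_value_def
proof (rule cSup_least)
  show "{Vrho P \<gamma> \<rho> pol r |pol. feasible_policy P \<gamma> \<rho> c b m pol} \<noteq> {}" using feasible by blast
  fix v assume "v \<in> {Vrho P \<gamma> \<rho> pol r |pol. feasible_policy P \<gamma> \<rho> c b m pol}"
  then obtain pol where "feasible_policy P \<gamma> \<rho> c b m pol" and "v = Vrho P \<gamma> \<rho> pol r" by blast
  then show "v \<le> occ_value r opt_occ"
    using occ_vec_feasible opt_occ(2) Vrho_eq_occ_value unfolding feasible_policy_def by auto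
qed

lemma lagrange_mult:
  "\<And>i. i < m \<Longrightarrow> 0 \<le> lagrange_mult i"
  "\<And>w. w \<in> occupancy_polytope \<Longrightarrow>
    occ_value r w + (\<Sum>i<m. lagrange_mult i * constr_value i w) \<le> occ_value r opt_occ"
proof -
  have "\<forall>w\<in>occupancy_polytope. (\<forall>i<m. b i \<le> occ_value (c i) w) \<longrightarrow> occ_value r w \<le> occ_value r opt_occ"
    using opt_occ(2) unfolding feasible_occ_def constr_value_def by auto
  from someI_ex[OF lagrange_multipliers[OF this]]
  show "\<And>i. i < m \<Longrightarrow> 0 \<le> lagrange_mult i"
    and "\<And>w. w \<in> occupancy_polytope \<Longrightarrow>
      occ_value r w + (\<Sum>i<m. lagrange_mult i * constr_value i w) \<le> occ_value r opt_occ"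
    unfolding lagrange_mult_def constr_value_def by auto
qed

lemma continuous_on_penalty: "continuous_on S (\<lambda>z. penalty \<beta> (f z) (l :: real))" if "continuous_on S f"
  unfolding penalty_def using that by (intro continuous_intros)

sublocale alm: aug_lagrangian_saddle occupancy_polytope "occ_value r" constr_value m \<beta>
  "occ_value r opt_occ" lagrange_mult opt_occ
proof unfold_locales
  show "0 < \<beta>" by (rule penalty_param_pos)
  show "convex occupancy_polytope" by (rule convex_occupancy_polytope)
  show "occ_value r ((1 - s) *\<^sub>R y + s *\<^sub>R z) = (1 - s) * occ_value r y + s * occ_value r z" for y z s
    by (rule occ_value_affine)
  show "constr_value i ((1 - s) *\<^sub>R y + s *\<^sub>R z) = (1 - s) * constr_value i y + s * constr_value i z"
    for i y z s unfolding constr_value_def occ_value_affine by (simp add: algebra_simps)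
  show "\<exists>y\<in>occupancy_polytope. \<forall>z\<in>occupancy_polytope.
      occ_value r z + (\<Sum>i<m. penalty \<beta> (constr_value i z) (l i))
      \<le> occ_value r y + (\<Sum>i<m. penalty \<beta> (constr_value i y) (l i))" for l
    using opt_occ(1) unfolding feasible_occ_def constr_value_def
    by (intro continuous_attains_sup compact_occupancy_polytope continuous_intros
        continuous_on_occ_value continuous_on_penalty) auto
  show "opt_occ \<in> occupancy_polytope" "\<And>i. i < m \<Longrightarrow> 0 \<le> constr_value i opt_occ"
    using opt_occ(1) unfolding feasible_occ_def by auto
  show "\<And>i. i < m \<Longrightarrow> 0 \<le> lagrange_mult i" by (rule lagrange_mult(1))
  show "occ_value r z + (\<Sum>i<m. lagrange_mult i * constr_value i z) \<le> occ_value r opt_occ"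
    if "z \<in> occupancy_polytope" for z
    using lagrange_mult(2)[OF that] .
qed simp

lemma aug_lag_eq_auglag:
  assumes "is_policy pol"
  shows "aug_lag P \<gamma> \<rho> r c b m \<beta> pol l = alm.auglag l (occ_vec pol)"
  unfolding aug_lag_def alm.auglag_def penalty_def constr_value_def Vrho_eq_occ_value[OF assms]
  by (simp add: sum_distrib_left)

lemma Sup_aug_lag_eq_dual:
  "Sup {aug_lag P \<gamma> \<rho> r c b m \<beta> pol l | pol. is_policy pol} = alm.dual_fn l"
proof (rule cSup_eq_maximum)
  obtain pol where "is_policy pol" and "occ_vec pol = alm.auglag_argmax l"
    using polytope_eq_occ_vec[OF alm.auglag_argmax_in] .
  then show "alm.dual_fn l \<in> {aug_lag P \<gamma> \<rho> r c b m \<beta> pol l | pol. is_policy pol}"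
    unfolding alm.dual_fn_def by (metis (mono_tags, lifting) aug_lag_eq_auglag mem_Collect_eq)
next
  fix v assume "v \<in> {aug_lag P \<gamma> \<rho> r c b m \<beta> pol l | pol. is_policy pol}"
  then obtain pol where "is_policy pol" and "v = aug_lag P \<gamma> \<rho> r c b m \<beta> pol l" by blast
  then show "v \<le> alm.dual_fn l"
    using aug_lag_eq_auglag alm.auglag_le_dual occ_vec_in_polytope by simp
qed

lemma lam_seq_step:
  assumes "1 \<le> t" and "is_policy (pis (t + 1))"
  shows "lam_seq P \<gamma> \<rho> c b \<beta> pis (t + 1) i = lam_seq P \<gamma> \<rho> c b \<beta> pis t i
    - \<beta> / 2 * alm.dual_grad (lam_seq P \<gamma> \<rho> c b \<beta> pis t) (occ_vec (pis (t + 1))) i"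
proof -
  obtain t' where t: "t = Suc t'" using assms(1) by (cases t) auto
  have "v - (b i + max (v - b i - l / \<beta>) 0) = min (v - b i) (l / \<beta>)" for v l
    by (simp add: min_def max_def)
  then show ?thesis
    unfolding t alm.dual_grad_def penalty_grad_def constr_value_def
    using Vrho_eq_occ_value[OF assms(2)[unfolded t]] by (simp add: Let_def)
qed

lemma alm_iterates_policies:
  assumes "0 \<le> C" and "\<forall>t\<ge>1. eps t \<le> C / (real t)\<^sup>2"
    and "\<forall>t\<in>{1..T + 1}. is_policy (pis t)"
    and "\<forall>t\<in>{1..T}. Sup {aug_lag P \<gamma> \<rho> r c b m \<beta> pol (lam_seq P \<gamma> \<rho> c b \<beta> pis t) | pol. is_policy pol}
      - eps t \<le> aug_lag P \<gamma> \<rho> r c b m \<beta> (pis (t + 1)) (lam_seq P \<gamma> \<rho> c b \<beta> pis t)"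
  shows "alm_iterates occupancy_polytope (occ_value r) constr_value m \<beta> (occ_value r opt_occ)
    lagrange_mult opt_occ C eps T (lam_seq P \<gamma> \<rho> c b \<beta> pis) (\<lambda>t. occ_vec (pis t))"
proof (intro alm_iterates.intro alm.aug_lagrangian_saddle_axioms alm_iterates_axioms.intro)
  fix t assume t: "1 \<le> t" "t \<le> T"
  then have pol: "is_policy (pis (t + 1))" using assms(3) by simp
  show "occ_vec (pis (t + 1)) \<in> occupancy_polytope" by (rule occ_vec_in_polytope[OF pol])
  show "alm.dual_fn (lam_seq P \<gamma> \<rho> c b \<beta> pis t) - eps t
      \<le> alm.auglag (lam_seq P \<gamma> \<rho> c b \<beta> pis t) (occ_vec (pis (t + 1)))"
  proof -
    have "Sup {aug_lag P \<gamma> \<rho> r c b m \<beta> pol (lam_seq P \<gamma> \<rho> c b \<beta> pis t) | pol. is_policy pol} - eps t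
        \<le> aug_lag P \<gamma> \<rho> r c b m \<beta> (pis (t + 1)) (lam_seq P \<gamma> \<rho> c b \<beta> pis t)"
      using assms(4) t by simp
    then show ?thesis unfolding Sup_aug_lag_eq_dual aug_lag_eq_auglag[OF pol] .
  qed
  show "lam_seq P \<gamma> \<rho> c b \<beta> pis (t + 1) i = lam_seq P \<gamma> \<rho> c b \<beta> pis t i
      - \<beta> / 2 * alm.dual_grad (lam_seq P \<gamma> \<rho> c b \<beta> pis t) (occ_vec (pis (t + 1))) i" for i
    by (rule lam_seq_step[where pis = pis, OF t(1) pol])
qed (use assms(1,2) in \<open>simp_all add: One_nat_def\<close>)

lemma policies_eps_optimal:
  assumes "0 < C" and "0 < \<epsilon>" and "\<epsilon> < 1" and "\<forall>t\<ge>1. eps t \<le> C / (real t)\<^sup>2"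
    and "alm.iteration_bound C / \<epsilon>\<^sup>2 \<le> real T"
    and "\<forall>t\<in>{1..T + 1}. is_policy (pis t)"
    and "\<forall>t\<in>{1..T}. Sup {aug_lag P \<gamma> \<rho> r c b m \<beta> pol (lam_seq P \<gamma> \<rho> c b \<beta> pis t) | pol. is_policy pol}
      - eps t \<le> aug_lag P \<gamma> \<rho> r c b m \<beta> (pis (t + 1)) (lam_seq P \<gamma> \<rho> c b \<beta> pis t)"
  shows "opt_value P \<gamma> \<rho> r c b m - \<epsilon> \<le> Vrho P \<gamma> \<rho> (pis (T + 1)) r
    \<and> (\<forall>i<m. b i - \<epsilon> \<le> Vrho P \<gamma> \<rho> (pis (T + 1)) (c i))"
proof -
  interpret run: alm_iterates occupancy_polytope "occ_value r" constr_value m \<beta> "occ_value r opt_occ"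
    lagrange_mult opt_occ C eps T "lam_seq P \<gamma> \<rho> c b \<beta> pis" "\<lambda>t. occ_vec (pis t)"
    using assms(1,4,6,7) by (intro alm_iterates_policies) auto
  have "is_policy (pis (T + 1))" using assms(6) by simp
  then show ?thesis
    using run.last_obj_ge[OF assms(2,3,5)] run.last_constr_ge[OF assms(2,3,5)] opt_value_le
    unfolding Vrho_eq_occ_value[OF \<open>is_policy (pis (T + 1))\<close>] constr_value_def by fastforce
qed

end

theorem theorem1:
  fixes P :: "'s::finite \<Rightarrow> 'a::finite \<Rightarrow> 's \<Rightarrow> real"
    and \<rho> :: "'s \<Rightarrow> real" and \<gamma> :: real
    and r :: "'s \<times> 'a \<Rightarrow> real" and c :: "nat \<Rightarrow> 's \<times> 'a \<Rightarrow> real"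
    and b :: "nat \<Rightarrow> real" and m :: nat and \<beta> :: real
  assumes kernel: "is_kernel P"
    and init: "is_distr \<rho>"
    and disc: "0 \<le> \<gamma>" "\<gamma> < 1"
    and rew: "\<forall>x. 0 \<le> r x \<and> r x \<le> 1"
    and cons: "\<forall>i<m. \<forall>x. 0 \<le> c i x \<and> c i x \<le> 1"
    and thr: "\<forall>i<m. 0 \<le> b i"
    and feas: "\<exists>pol. feasible_policy P \<gamma> \<rho> c b m pol"
    and beta: "\<beta> > 0"
  shows "\<forall>C1>0. \<exists>C2>0. \<forall>\<epsilon> (eps :: nat \<Rightarrow> real) (T :: nat) (pis :: nat \<Rightarrow> 's \<Rightarrow> 'a \<Rightarrow> real).
    0 < \<epsilon> \<and> \<epsilon> < 1
    \<and> (\<forall>t\<ge>1. eps t \<le> C1 / (real t)\<^sup>2)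
    \<and> real T \<ge> C2 / \<epsilon>\<^sup>2
    \<and> (\<forall>t\<in>{1..T+1}. is_policy (pis t))
    \<and> (\<forall>t\<in>{1..T}.
         aug_lag P \<gamma> \<rho> r c b m \<beta> (pis (t + 1)) (lam_seq P \<gamma> \<rho> c b \<beta> pis t)
         \<ge> Sup {aug_lag P \<gamma> \<rho> r c b m \<beta> pol (lam_seq P \<gamma> \<rho> c b \<beta> pis t) | pol. is_policy pol}
           - eps t)
    \<longrightarrow> Vrho P \<gamma> \<rho> (pis (T + 1)) r \<ge> opt_value P \<gamma> \<rho> r c b m - \<epsilon>
      \<and> (\<forall>i<m. Vrho P \<gamma> \<rho> (pis (T + 1)) (c i) \<ge> b i - \<epsilon>)"
proof -
  interpret cmdp P \<gamma> \<rho> r c b m \<beta>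
    using kernel init disc feas beta by unfold_locales
  show ?thesis
    apply (intro allI impI)
    subgoal for C1
      using alm.iteration_bound_ge(1)[of C1] policies_eps_optimal[of C1]
      by (intro exI[where x = "alm.iteration_bound C1"]) auto
    done
qed

end
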